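(* Let $p>1$ and $l\ge 0$ be constants and let $q$ satisfy $1/p+1/q=1$. Let $\tau$ be an $(\mathcal F_t)_{t\ge 0}$-stopping time and let $\xi$ be a non-negative random variable. Let $a(t)$ and $x(t)$ be non-negative $(\mathcal F_t)_{t\ge0}$-progressively measurable processes. Assume that $a(t)>\epsilon$ for some constant $\epsilon>0$, and put $A(t):=\int_0^t a(s)\,ds$. Assume that there is a constant $\theta\ge 0$ such that \[ \mathbb E\Big[e^{\frac{q}{2}(2l-\theta)^+A(\tau)}\Big]<\infty, \] $\xi$ is $\mathcal F_\tau$-measurable with $\mathbb E\big[e^{\frac p2\theta A(\tau)}|\xi|^p\big]<\infty$, and $x$ is a càdlàg adapted process with \[ \mathbb E\bigg[\bigg(\int_0^\tau a(t)\,e^{\frac{\theta}{2}A(t)}|x(t)|\,dt\bigg)^p\bigg]<\infty . \] If, for every $t\ge 0$, \[ x(t)\le \mathbb E\Big[\xi+l\int_{t\wedge\tau}^{\tau}a(s)x(s)\,ds\,\Big|\,\mathcal F_t\Big]\quad \mathbb P\text{-a.s.}, \] then for every $t\ge0$, $\mathbb P$-a.s., \[ x(t)\le \mathbb E\Big[\xi\, e^{l\int_{t\wedge\tau}^{\tau}a(s)\,ds}\,\Big|\,\mathcal F_t\Big]. \]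
   Context: $(\Omega,\mathcal F,\mathbb P)$ is a complete probability space carrying a $d$-dimensional Brownian motion $B=(B_t)_{t\ge0}$, and $(\mathcal F_t)_{t\ge0}$ is the right-continuous completion (augmented by $\mathbb P$-null sets) of the natural filtration $\sigma\{B_s,s\le t\}$ of $B$. For $m\in\mathbb R$, $m^+:=\max\{m,0\}$, and $m\wedge n:=\min\{m,n\}$. *)

theory Defs
  imports "HOL-Probability.Probability"
begin

text \<open>A d-dimensional Brownian motion, given componentwise: B i t w is the i-th
  coordinate (i < d) of B at time t.  Natural filtration of B.\<close>

definition natural_sets :: "'w measure \<Rightarrow> nat \<Rightarrow> (nat \<Rightarrow> real \<Rightarrow> 'w \<Rightarrow> real) \<Rightarrow> real \<Rightarrow> 'w set set" where
  "natural_sets M d B t =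
     sigma_sets (space M)
       {(B i u) -` S \<inter> space M | i u S. i < d \<and> 0 \<le> u \<and> u \<le> t \<and> S \<in> sets borel}"

definition brownian_motion :: "'w measure \<Rightarrow> nat \<Rightarrow> (nat \<Rightarrow> real \<Rightarrow> 'w \<Rightarrow> real) \<Rightarrow> bool" where
  "brownian_motion M d B \<longleftrightarrow>
     prob_space M \<and>
     (\<forall>i<d. \<forall>t\<ge>0. B i t \<in> borel_measurable M) \<and>
     (\<forall>i<d. \<forall>w\<in>space M. B i 0 w = 0) \<and>
     (\<forall>i<d. \<forall>w\<in>space M. continuous_on {0..} (\<lambda>t. B i t w)) \<and>
     (\<forall>s t. 0 \<le> s \<longrightarrow> s < t \<longrightarrow>
        (\<forall>i<d. distributed M lborel (\<lambda>w. B i t w - B i s w) (normal_density 0 (sqrt (t - s)))) \<and>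
        prob_space.indep_sets M
          (\<lambda>j. case j of None \<Rightarrow> natural_sets M d B s
                      | Some i \<Rightarrow> sets (vimage_algebra (space M) (\<lambda>w. B i t w - B i s w) borel))
          (insert None (Some ` {..<d})))"

text \<open>The right-continuous completion of the natural filtration, augmented by the
  M-null sets: F_t = intersection over u > t of sigma(F^B_u and null sets).\<close>

definition bm_filtration :: "'w measure \<Rightarrow> nat \<Rightarrow> (nat \<Rightarrow> real \<Rightarrow> 'w \<Rightarrow> real) \<Rightarrow> real \<Rightarrow> 'w measure" where
  "bm_filtration M d B t =
     sigma (space M) (\<Inter>u\<in>{t<..}. sigma_sets (space M) (natural_sets M d B u \<union> null_sets M))"

definition progressive :: "(real \<Rightarrow> 'w measure) \<Rightarrow> (real \<Rightarrow> 'w \<Rightarrow> real) \<Rightarrow> bool" where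
  "progressive F X \<longleftrightarrow>
     (\<forall>t\<ge>0. (\<lambda>(s, w). X s w) \<in> borel_measurable (restrict_space borel {0..t} \<Otimes>\<^sub>M F t))"

definition adapted :: "(real \<Rightarrow> 'w measure) \<Rightarrow> (real \<Rightarrow> 'w \<Rightarrow> real) \<Rightarrow> bool" where
  "adapted F X \<longleftrightarrow> (\<forall>t\<ge>0. X t \<in> borel_measurable (F t))"

definition cadlag :: "'w set \<Rightarrow> (real \<Rightarrow> 'w \<Rightarrow> real) \<Rightarrow> bool" where
  "cadlag \<Omega> X \<longleftrightarrow>
     (\<forall>w\<in>\<Omega>. \<forall>t\<ge>0. continuous (at_right t) (\<lambda>s. X s w) \<and>
        (0 < t \<longrightarrow> (\<exists>L. ((\<lambda>s. X s w) \<longlongrightarrow> L) (at_left t))))"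

end

theory Submission
  imports Defs
begin

text \<open>Fix \<open>t\<close> and put \<open>W(s) = exp (l \<integral>\<^sub>t\<^sup>s a)\<close>. The hypothesis at time \<open>s\<close>, multiplied by
  the \<open>F\<^sub>s\<close>-measurable density \<open>l a(s) W(s)\<close> on \<open>t \<le> s \<le> \<tau>\<close>, is integrated over \<open>s\<close> and over an
  event \<open>B \<in> F\<^sub>t\<close>. Since \<open>\<integral>\<^sub>t\<^sup>r l a W \<le> W(r) - 1\<close>, Fubini's theorem turns the result into
  \<open>E[1\<^sub>B (U + V)] \<le> E[1\<^sub>B (\<xi> (W(\<tau>) - 1) + U)]\<close> with \<open>V = \<integral>\<^sub>t\<^sup>\<tau> l a x\<close> and
  \<open>U = \<integral>\<^sub>t\<^sup>\<tau> l a x (W - 1)\<close>. By Young's inequality the moment hypotheses make \<open>U\<close> integrable,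
  so it cancels, and the hypothesis at time \<open>t\<close> then gives \<open>E[1\<^sub>B x(t)] \<le> E[1\<^sub>B \<xi> W(\<tau>)]\<close>
  for every \<open>B \<in> F\<^sub>t\<close>, which is the claimed bound by the defining property of conditional
  expectation.\<close>

section \<open>Exponentials of indefinite integrals\<close>

lemma ennreal_exp_minus_one_eq_nn_integral:
  fixes l c :: real
  assumes "0 \<le> l"
  shows "ennreal (exp (l * c) - 1) = (\<integral>\<^sup>+ v. ennreal (l * exp (l * v)) * indicator {0..<c} v \<partial>lborel)"
proof (cases "0 \<le> c")
  case True
  have "((\<lambda>v. l * exp (l * v)) has_integral (exp (l * c) - exp (l * 0))) {0..c}"
    by (rule fundamental_theorem_of_calculus)
      (use assms True in \<open>auto intro!: derivative_eq_intros
        simp: has_real_derivative_iff_has_vector_derivative[symmetric]\<close>)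
  then have "(\<integral>\<^sup>+ v. ennreal (l * exp (l * v)) * indicator {0..c} v \<partial>lborel) = ennreal (exp (l * c) - 1)"
    by (subst nn_integral_has_integral_lebesgue'[where I="exp (l * c) - 1"]) (use assms in auto)
  moreover have "(\<integral>\<^sup>+ v. ennreal (l * exp (l * v)) * indicator {0..c} v \<partial>lborel)
      = (\<integral>\<^sup>+ v. ennreal (l * exp (l * v)) * indicator {0..<c} v \<partial>lborel)"
    by (rule nn_integral_cong_AE) (use AE_lborel_singleton[of c] in \<open>auto simp: indicator_def\<close>)
  ultimately show ?thesis by simp
next
  case False
  then have "exp (l * c) \<le> 1" using assms by (simp add: mult_nonneg_nonpos)
  then show ?thesis using False by (simp add: ennreal_neg)
qed

lemma nn_integral_times_exp_minus_one:
  fixes g :: "real \<Rightarrow> ennreal" and D :: "real \<Rightarrow> real"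
  assumes [measurable]: "g \<in> borel_measurable borel" "D \<in> borel_measurable borel" and "0 \<le> l"
  shows "(\<integral>\<^sup>+ s. g s * ennreal (exp (l * D s) - 1) \<partial>lborel)
    = (\<integral>\<^sup>+ v. ennreal (l * exp (l * v)) * indicator {0..} v * (\<integral>\<^sup>+ s. g s * indicator {s. v < D s} s \<partial>lborel) \<partial>lborel)"
proof -
  define K where "K s v = g s * (ennreal (l * exp (l * v)) * indicator {0..<D s} v)" for s v
  have "(\<lambda>(s, v). K s v) = (\<lambda>z. g (fst z) * (ennreal (l * exp (l * snd z)) *
      indicator {z. 0 \<le> snd z \<and> snd z < D (fst z)} z))"
    by (auto simp: K_def indicator_def fun_eq_iff)
  then have K_measurable: "(\<lambda>(s, v). K s v) \<in> borel_measurable (lborel \<Otimes>\<^sub>M lborel)"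
    by simp
  have "(\<integral>\<^sup>+ s. g s * ennreal (exp (l * D s) - 1) \<partial>lborel) = (\<integral>\<^sup>+ s. \<integral>\<^sup>+ v. K s v \<partial>lborel \<partial>lborel)"
    unfolding K_def ennreal_exp_minus_one_eq_nn_integral[OF \<open>0 \<le> l\<close>] by (simp add: nn_integral_cmult)
  also have "\<dots> = (\<integral>\<^sup>+ v. \<integral>\<^sup>+ s. K s v \<partial>lborel \<partial>lborel)"
    using lborel_pair.Fubini'[OF K_measurable] by simp
  also have "\<dots> = (\<integral>\<^sup>+ v. ennreal (l * exp (l * v)) * indicator {0..} v
      * (\<integral>\<^sup>+ s. g s * indicator {s. v < D s} s \<partial>lborel) \<partial>lborel)"
  proof (rule nn_integral_cong)
    fix v
    have "K s v = ennreal (l * exp (l * v)) * indicator {0..} v * (g s * indicator {s. v < D s} s)" for s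
      by (auto simp: K_def indicator_def mult_ac)
    then show "(\<integral>\<^sup>+ s. K s v \<partial>lborel) = ennreal (l * exp (l * v)) * indicator {0..} v
        * (\<integral>\<^sup>+ s. g s * indicator {s. v < D s} s \<partial>lborel)"
      by (simp add: nn_integral_cmult)
  qed
  finally show ?thesis .
qed

lemma nn_integral_exp_deriv_times_distance:
  fixes l c :: real
  assumes "0 \<le> c" "0 \<le> l"
  shows "(\<integral>\<^sup>+ v. ennreal (l * l * exp (l * v) * (c - v)) * indicator {0..c} v \<partial>lborel)
    = ennreal (exp (l * c) - l * c - 1)"
proof -
  have "((\<lambda>v. l * l * exp (l * v) * (c - v)) has_integral
      ((l * (c - c) * exp (l * c) + exp (l * c)) - (l * (c - 0) * exp (l * 0) + exp (l * 0)))) {0..c}"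
    by (rule fundamental_theorem_of_calculus)
      (use assms in \<open>auto intro!: derivative_eq_intros
        simp: has_real_derivative_iff_has_vector_derivative[symmetric] algebra_simps\<close>)
  then have "((\<lambda>v. l * l * exp (l * v) * (c - v)) has_integral (exp (l * c) - l * c - 1)) {0..c}"
    by (simp add: algebra_simps)
  then show ?thesis
    by (subst nn_integral_has_integral_lebesgue'[where I="exp (l * c) - l * c - 1"]) (use assms in auto)
qed

lemma indefinite_integral_increment:
  fixes f :: "real \<Rightarrow> real"
  assumes f: "f integrable_on {t..r}" and f_nonneg: "\<And>u. u \<in> {t..r} \<Longrightarrow> 0 \<le> f u"
    and "t \<le> \<sigma>" "\<sigma> \<le> s" "s \<le> r"
  shows "integral {t..s} f = integral {t..\<sigma>} f + integral {\<sigma>..s} f"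
    and "0 \<le> integral {\<sigma>..s} f"
proof -
  have "f integrable_on {t..s}"
    using f by (rule integrable_on_subinterval) (use assms in auto)
  then show "integral {t..s} f = integral {t..\<sigma>} f + integral {\<sigma>..s} f"
    using Henstock_Kurzweil_Integration.integral_combine[of t \<sigma> s f] assms by auto
  show "0 \<le> integral {\<sigma>..s} f"
    by (rule integral_nonneg) (use assms in \<open>auto intro: integrable_on_subinterval[OF f]\<close>)
qed

lemma borel_measurable_indefinite_integral_indicator:
  fixes f :: "real \<Rightarrow> real"
  assumes "f integrable_on {t..r}"
  shows "(\<lambda>s. indicator {t..r} s *\<^sub>R integral {t..s} f) \<in> borel_measurable borel"
  by (rule borel_measurable_continuous_on_indicator)
    (use indefinite_integral_continuous_1[OF assms] in auto)

lemma nn_integral_indefinite_integral_superlevel: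
  fixes f :: "real \<Rightarrow> real"
  assumes f: "f integrable_on {t..r}" and f_nonneg: "\<And>u. u \<in> {t..r} \<Longrightarrow> 0 \<le> f u"
    and "t \<le> r" "0 \<le> l" "0 \<le> v"
  shows "(\<integral>\<^sup>+ s. ennreal (l * f s) * indicator {s \<in> {t..r}. v < integral {t..s} f} s \<partial>lborel)
    \<le> ennreal (l * (integral {t..r} f - v))"
proof -
  define D where "D s = integral {t..s} f" for s
  note increment = indefinite_integral_increment[OF f f_nonneg, folded D_def]
  show ?thesis
  proof (cases "v < D r")
    case True
    have "continuous_on {t..r} D"
      unfolding D_def by (rule indefinite_integral_continuous_1[OF f])
    then obtain \<sigma> where \<sigma>: "\<sigma> \<in> {t..r}" "D \<sigma> = v"
      using IVT'[of D t v r] \<open>0 \<le> v\<close> True \<open>t \<le> r\<close> by (auto simp: D_def)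
    have "\<sigma> \<le> s" if "s \<in> {t..r}" "v < D s" for s
    proof (rule ccontr)
      assume "\<not> \<sigma> \<le> s"
      then have "D \<sigma> = D s + integral {s..\<sigma>} f" "0 \<le> integral {s..\<sigma>} f"
        using increment[of s \<sigma>] \<sigma> that by auto
      then show False using \<sigma> that by linarith
    qed
    then have "(\<integral>\<^sup>+ s. ennreal (l * f s) * indicator {s \<in> {t..r}. v < D s} s \<partial>lborel)
        \<le> (\<integral>\<^sup>+ s. ennreal (l * f s) * indicator {\<sigma>..r} s \<partial>lborel)"
      by (intro nn_integral_mono) (auto split: split_indicator)
    also have "\<dots> = ennreal (l * integral {\<sigma>..r} f)"
      by (rule nn_integral_has_integral_lebesgue')
        (use f_nonneg \<sigma> \<open>0 \<le> l\<close> in \<open>auto intro!: has_integral_mult_right integrable_integral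
          integrable_on_subinterval[OF f]\<close>)
    also have "integral {\<sigma>..r} f = D r - v"
      using increment(1)[of \<sigma> r] \<sigma> by auto
    finally show ?thesis unfolding D_def .
  next
    case False
    have "D s \<le> D r" if "s \<in> {t..r}" for s
      using increment[of s r] that by auto
    then have "{s \<in> {t..r}. v < D s} = {}"
      using False by force
    then show ?thesis by (simp add: D_def)
  qed
qed

lemma exp_times_nn_integral_superlevel_le:
  fixes f :: "real \<Rightarrow> real"
  assumes f: "f integrable_on {t..r}" and f_nonneg: "\<And>u. u \<in> {t..r} \<Longrightarrow> 0 \<le> f u"
    and "t \<le> r" "0 \<le> l"
  shows "ennreal (l * exp (l * v)) * indicator {0..} v
      * (\<integral>\<^sup>+ s. ennreal (l * f s) * indicator {s \<in> {t..r}. v < integral {t..s} f} s \<partial>lborel)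
    \<le> ennreal (l * l * exp (l * v) * (integral {t..r} f - v)) * indicator {0..integral {t..r} f} v"
proof (cases "0 \<le> v")
  case True
  then have "ennreal (l * exp (l * v)) * indicator {0..} v
      * (\<integral>\<^sup>+ s. ennreal (l * f s) * indicator {s \<in> {t..r}. v < integral {t..s} f} s \<partial>lborel)
    \<le> ennreal (l * exp (l * v)) * ennreal (l * (integral {t..r} f - v))"
    using nn_integral_indefinite_integral_superlevel[OF f f_nonneg \<open>t \<le> r\<close> \<open>0 \<le> l\<close> True]
    by (auto intro: mult_left_mono)
  also have "\<dots> = ennreal (l * l * exp (l * v) * (integral {t..r} f - v)) * indicator {0..integral {t..r} f} v"
    using True \<open>0 \<le> l\<close>
    by (cases "v \<le> integral {t..r} f") (auto simp: ennreal_mult[symmetric] ennreal_neg mult_ac mult_nonneg_nonpos)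
  finally show ?thesis .
qed simp

text \<open>The indefinite integral is cut off outside \<open>[t, r]\<close> only to make the integrand Borel
  measurable on the whole line.\<close>

lemma nn_integral_exp_indefinite_integral_minus_one_le:
  fixes f :: "real \<Rightarrow> real"
  assumes f: "f integrable_on {t..r}" and f_nonneg: "\<And>u. u \<in> {t..r} \<Longrightarrow> 0 \<le> f u"
    and f_borel[measurable]: "f \<in> borel_measurable borel" and "t \<le> r" "0 \<le> l"
  shows "(\<integral>\<^sup>+ s. ennreal (l * f s) * indicator {t..r} s * ennreal (exp (l * (indicator {t..r} s *\<^sub>R integral {t..s} f)) - 1) \<partial>lborel)
    \<le> ennreal (exp (l * integral {t..r} f) - l * integral {t..r} f - 1)"
    (is "(\<integral>\<^sup>+ s. _ * ennreal (exp (l * ?D s) - 1) \<partial>lborel) \<le> _")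
proof -
  have [measurable]: "?D \<in> borel_measurable borel"
    by (rule borel_measurable_indefinite_integral_indicator[OF f])
  have "(\<integral>\<^sup>+ s. ennreal (l * f s) * indicator {t..r} s * ennreal (exp (l * ?D s) - 1) \<partial>lborel)
      = (\<integral>\<^sup>+ v. ennreal (l * exp (l * v)) * indicator {0..} v
        * (\<integral>\<^sup>+ s. ennreal (l * f s) * indicator {t..r} s * indicator {s. v < ?D s} s \<partial>lborel) \<partial>lborel)"
    by (rule nn_integral_times_exp_minus_one[OF _ _ \<open>0 \<le> l\<close>]) measurable
  also have "\<dots> = (\<integral>\<^sup>+ v. ennreal (l * exp (l * v)) * indicator {0..} v
        * (\<integral>\<^sup>+ s. ennreal (l * f s) * indicator {s \<in> {t..r}. v < integral {t..s} f} s \<partial>lborel) \<partial>lborel)"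
  proof -
    have "ennreal (l * f s) * indicator {t..r} s * indicator {s. v < ?D s} s
        = ennreal (l * f s) * indicator {s \<in> {t..r}. v < integral {t..s} f} s" for s v
      by (simp add: indicator_def)
    then show ?thesis by simp
  qed
  also have "\<dots> \<le> (\<integral>\<^sup>+ v. ennreal (l * l * exp (l * v) * (integral {t..r} f - v))
      * indicator {0..integral {t..r} f} v \<partial>lborel)"
    by (intro nn_integral_mono exp_times_nn_integral_superlevel_le[OF f f_nonneg \<open>t \<le> r\<close> \<open>0 \<le> l\<close>])
  also have "\<dots> = ennreal (exp (l * integral {t..r} f) - l * integral {t..r} f - 1)"
    using nn_integral_exp_deriv_times_distance indefinite_integral_increment[OF f f_nonneg, of t r]
      \<open>t \<le> r\<close> \<open>0 \<le> l\<close> by simp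
  finally show ?thesis .
qed

lemma nn_integral_exp_indefinite_integral_le:
  fixes f :: "real \<Rightarrow> real"
  assumes f: "f integrable_on {t..r}" and f_nonneg: "\<And>u. u \<in> {t..r} \<Longrightarrow> 0 \<le> f u"
    and f_borel[measurable]: "f \<in> borel_measurable borel" and "t \<le> r" "0 \<le> l"
  shows "(\<integral>\<^sup>+ s. ennreal (l * f s * exp (l * integral {t..s} f)) * indicator {t..r} s \<partial>lborel)
    \<le> ennreal (exp (l * integral {t..r} f) - 1)"
proof -
  define D where "D s = indicator {t..r} s *\<^sub>R integral {t..s} f" for s
  have [measurable]: "D \<in> borel_measurable borel"
    unfolding D_def by (rule borel_measurable_indefinite_integral_indicator[OF f])
  have D_nonneg: "0 \<le> D s" for s
    using indefinite_integral_increment(2)[OF f f_nonneg, of t s] by (simp add: D_def indicator_def)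
  have "(\<integral>\<^sup>+ s. ennreal (l * f s * exp (l * integral {t..s} f)) * indicator {t..r} s \<partial>lborel)
      = (\<integral>\<^sup>+ s. ennreal (l * f s) * indicator {t..r} s
          + ennreal (l * f s) * indicator {t..r} s * ennreal (exp (l * D s) - 1) \<partial>lborel)"
  proof (rule nn_integral_cong)
    fix s
    have "l * f s * exp (l * D s) = l * f s + l * f s * (exp (l * D s) - 1)"
      by (simp add: algebra_simps)
    moreover have "0 \<le> l * f s" "0 \<le> exp (l * D s) - 1" if "s \<in> {t..r}"
      using f_nonneg[OF that] D_nonneg[of s] \<open>0 \<le> l\<close> by auto
    ultimately show "ennreal (l * f s * exp (l * integral {t..s} f)) * indicator {t..r} s
        = ennreal (l * f s) * indicator {t..r} s + ennreal (l * f s) * indicator {t..r} s * ennreal (exp (l * D s) - 1)"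
      by (cases "s \<in> {t..r}") (simp_all add: D_def ennreal_plus ennreal_mult)
  qed
  also have "\<dots> = (\<integral>\<^sup>+ s. ennreal (l * f s) * indicator {t..r} s \<partial>lborel)
      + (\<integral>\<^sup>+ s. ennreal (l * f s) * indicator {t..r} s * ennreal (exp (l * D s) - 1) \<partial>lborel)"
    by (rule nn_integral_add) auto
  also have "(\<integral>\<^sup>+ s. ennreal (l * f s) * indicator {t..r} s \<partial>lborel) = ennreal (l * integral {t..r} f)"
    by (rule nn_integral_has_integral_lebesgue')
      (use f_nonneg \<open>0 \<le> l\<close> f in \<open>auto intro!: has_integral_mult_right integrable_integral\<close>)
  also have "(\<integral>\<^sup>+ s. ennreal (l * f s) * indicator {t..r} s * ennreal (exp (l * D s) - 1) \<partial>lborel)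
      \<le> ennreal (exp (l * integral {t..r} f) - l * integral {t..r} f - 1)"
    unfolding D_def by (rule nn_integral_exp_indefinite_integral_minus_one_le) (use assms in auto)
  also have "ennreal (l * integral {t..r} f) + ennreal (exp (l * integral {t..r} f) - l * integral {t..r} f - 1)
      = ennreal (exp (l * integral {t..r} f) - 1)"
    using exp_ge_add_one_self[of "l * integral {t..r} f"] D_nonneg[of r] \<open>t \<le> r\<close> \<open>0 \<le> l\<close>
    by (subst ennreal_plus[symmetric]) (simp_all add: D_def del: exp_ge_add_one_self)
  finally show ?thesis by (simp add: add_left_mono)
qed

section \<open>Comparison with conditional expectations\<close>

context sigma_finite_subalgebra
begin

lemma nn_integral_mult_le_of_AE_le_real_cond_exp:
  assumes le: "AE w in M. X w \<le> real_cond_exp M F Y w"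
    and X_nonneg: "\<And>w. w \<in> space M \<Longrightarrow> 0 \<le> X w"
    and Y_nonneg: "\<And>w. w \<in> space M \<Longrightarrow> 0 \<le> Y w"
    and [measurable]: "\<psi> \<in> borel_measurable F"
  shows "(\<integral>\<^sup>+ w. \<psi> w * ennreal (X w) \<partial>M) \<le> (\<integral>\<^sup>+ w. \<psi> w * ennreal (Y w) \<partial>M)"
proof -
  let ?N = "nn_cond_exp M F (\<lambda>w. ennreal (Y w))"
  have cond_exp_le: "real_cond_exp M F Y w \<le> enn2real (?N w)" for w
    unfolding real_cond_exp_def by simp
  show ?thesis
  proof (cases "(\<lambda>w. ennreal (Y w)) \<in> borel_measurable M")
    case True
    have "AE w in M. ennreal (X w) \<le> ?N w"
      using le
    proof eventually_elim
      case (elim w)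
      then have "X w \<le> enn2real (?N w)" using cond_exp_le[of w] by linarith
      then show ?case
        by (cases "?N w = \<top>") (auto simp: ennreal_enn2real_if intro: order_trans[OF ennreal_leI])
    qed
    then have "(\<integral>\<^sup>+ w. \<psi> w * ennreal (X w) \<partial>M) \<le> (\<integral>\<^sup>+ w. \<psi> w * ?N w \<partial>M)"
      by (intro nn_integral_mono_AE) (auto elim!: eventually_mono intro: mult_left_mono)
    also have "\<dots> = (\<integral>\<^sup>+ w. \<psi> w * ennreal (Y w) \<partial>M)"
      by (rule nn_cond_exp_intg) (use True in auto)
    finally show ?thesis .
  next
    case False
    then have neg: "real_cond_exp M F Y w \<le> 0" for w
      using cond_exp_le[of w] by (simp add: nn_cond_exp_def)
    have "AE w in M. ennreal (X w) = 0"
      using le AE_space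
    proof eventually_elim
      case (elim w)
      then show ?case using X_nonneg[of w] neg[of w] by simp
    qed
    then have "(\<integral>\<^sup>+ w. \<psi> w * ennreal (X w) \<partial>M) = (\<integral>\<^sup>+ w. 0 \<partial>M)"
      by (intro nn_integral_cong_AE) (auto elim!: eventually_mono)
    then show ?thesis by simp
  qed
qed

lemma AE_le_nn_cond_exp_of_set_nn_integral_le:
  assumes [measurable]: "X \<in> borel_measurable F" "Y \<in> borel_measurable M"
    and Y_finite: "(\<integral>\<^sup>+ w. Y w \<partial>M) < \<infinity>"
    and le: "\<And>B. B \<in> sets F \<Longrightarrow> (\<integral>\<^sup>+ w. indicator B w * X w \<partial>M) \<le> (\<integral>\<^sup>+ w. indicator B w * Y w \<partial>M)"
  shows "AE w in M. X w \<le> nn_cond_exp M F Y w"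
proof -
  define N where "N = nn_cond_exp M F Y"
  have [measurable]: "N \<in> borel_measurable F" "N \<in> borel_measurable M" "X \<in> borel_measurable M"
    using subalg by (auto simp: N_def subalgebra_def intro: borel_measurable_subalgebra)
  have N_intg: "(\<integral>\<^sup>+ w. f w * N w \<partial>M) = (\<integral>\<^sup>+ w. f w * Y w \<partial>M)" if [measurable]: "f \<in> borel_measurable F" for f
    unfolding N_def by (rule nn_cond_exp_intg) auto
  define S where "S = {w \<in> space M. N w < X w}"
  have S_F: "S \<in> sets F"
  proof -
    have "S = {w \<in> space F. N w < X w}" using subalg by (simp add: S_def subalgebra_def)
    also have "\<dots> \<in> sets F" by measurable
    finally show ?thesis .
  qed
  then have [measurable]: "S \<in> sets M" using subalg by (auto simp: subalgebra_def)
  have "(\<integral>\<^sup>+ w. indicator S w * N w \<partial>M) \<le> (\<integral>\<^sup>+ w. N w \<partial>M)"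
    by (intro nn_integral_mono) (auto simp: indicator_def)
  also have "\<dots> < \<infinity>" using N_intg[of "\<lambda>_. 1"] Y_finite by simp
  finally have S_finite: "(\<integral>\<^sup>+ w. indicator S w * N w \<partial>M) \<noteq> \<infinity>" by simp
  have "(\<integral>\<^sup>+ w. indicator S w * X w - indicator S w * N w \<partial>M)
      = (\<integral>\<^sup>+ w. indicator S w * X w \<partial>M) - (\<integral>\<^sup>+ w. indicator S w * N w \<partial>M)"
    by (rule nn_integral_diff) (use S_finite in \<open>auto simp: S_def indicator_def\<close>)
  also have "\<dots> = 0"
    using le[OF S_F] N_intg[of "indicator S"] S_F S_finite by (intro diff_eq_0_ennreal) (auto simp: less_top)
  finally have "AE w in M. indicator S w * X w - indicator S w * N w = 0"
    by (subst (asm) nn_integral_0_iff_AE) auto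
  then have "AE w in M. X w \<le> N w"
    using AE_space
  proof eventually_elim
    case (elim w)
    then show ?case by (cases "N w < X w") (auto simp: S_def diff_eq_0_iff_ennreal)
  qed
  then show ?thesis by (simp add: N_def)
qed

lemma AE_le_real_cond_exp_of_set_nn_integral_le:
  assumes [measurable]: "X \<in> borel_measurable F" "Y \<in> borel_measurable M"
    and Y_nonneg: "\<And>w. w \<in> space M \<Longrightarrow> 0 \<le> Y w"
    and Y_finite: "(\<integral>\<^sup>+ w. ennreal (Y w) \<partial>M) < \<infinity>"
    and le: "\<And>B. B \<in> sets F \<Longrightarrow>
      (\<integral>\<^sup>+ w. indicator B w * ennreal (X w) \<partial>M) \<le> (\<integral>\<^sup>+ w. indicator B w * ennreal (Y w) \<partial>M)"
  shows "AE w in M. X w \<le> real_cond_exp M F Y w"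
proof -
  define N where "N = nn_cond_exp M F (\<lambda>w. ennreal (Y w))"
  define N' where "N' = nn_cond_exp M F (\<lambda>w. ennreal (- Y w))"
  have X_le: "AE w in M. ennreal (X w) \<le> N w"
    unfolding N_def by (rule AE_le_nn_cond_exp_of_set_nn_integral_le) (use Y_finite le in auto)
  have N_finite: "AE w in M. N w \<noteq> \<infinity>"
    by (rule nn_integral_PInf_AE) (use Y_finite nn_cond_exp_intg[of "\<lambda>_. 1" "\<lambda>w. ennreal (Y w)"] in
      \<open>auto simp: N_def\<close>)
  have "(\<integral>\<^sup>+ w. N' w \<partial>M) = (\<integral>\<^sup>+ w. ennreal (- Y w) \<partial>M)"
    unfolding N'_def using nn_cond_exp_intg[of "\<lambda>_. 1" "\<lambda>w. ennreal (- Y w)"] by simp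
  also have "\<dots> = 0" using Y_nonneg by (subst nn_integral_0_iff_AE) (auto simp: ennreal_neg)
  finally have "AE w in M. N' w = 0" by (subst (asm) nn_integral_0_iff_AE) (auto simp: N'_def)
  with X_le N_finite show ?thesis
  proof eventually_elim
    case (elim w)
    then have "X w \<le> enn2real (N w)"
      by (cases "0 \<le> X w") (auto simp: less_top intro: order_trans[OF _ enn2real_nonneg]
        dest: enn2real_mono)
    then show ?case using elim by (simp add: real_cond_exp_def N_def[symmetric] N'_def[symmetric])
  qed
qed

end

section \<open>Set integrals and progressive processes\<close>

lemma set_lebesgue_integral_nonneg:
  fixes f :: "real \<Rightarrow> real"
  assumes "\<And>u. u \<in> S \<Longrightarrow> 0 \<le> f u"
  shows "0 \<le> (LBINT u:S. f u)"
  unfolding set_lebesgue_integral_def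
  by (rule integral_nonneg_AE) (use assms in \<open>auto simp: indicator_def\<close>)

lemma ennreal_set_integral_le_nn_integral:
  fixes f :: "real \<Rightarrow> real"
  assumes "\<And>u. u \<in> S \<Longrightarrow> 0 \<le> f u"
  shows "ennreal (LBINT u:S. f u) \<le> (\<integral>\<^sup>+ u. ennreal (f u) * indicator S u \<partial>lborel)"
proof (cases "set_integrable lborel S f")
  case True
  have "ennreal (LBINT u:S. f u) = (\<integral>\<^sup>+ u. ennreal (indicator S u *\<^sub>R f u) \<partial>lborel)"
    unfolding set_lebesgue_integral_def
    by (rule nn_integral_eq_integral[symmetric])
      (use True assms in \<open>auto simp: set_integrable_def indicator_def\<close>)
  also have "\<dots> = (\<integral>\<^sup>+ u. ennreal (f u) * indicator S u \<partial>lborel)"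
    by (rule nn_integral_cong) (auto simp: indicator_def)
  finally show ?thesis by simp
next
  case False
  then have "(LBINT u:S. f u) = 0"
    unfolding set_lebesgue_integral_def set_integrable_def by (rule not_integrable_integral_eq)
  then show ?thesis by simp
qed

lemma set_integral_subinterval_eq_integral:
  fixes f :: "real \<Rightarrow> real"
  assumes "set_integrable lborel {0..\<gamma>} f" "0 \<le> \<alpha>" "\<beta> \<le> \<gamma>"
  shows "f integrable_on {\<alpha>..\<beta>}" "(LBINT u:{\<alpha>..\<beta>}. f u) = integral {\<alpha>..\<beta>} f"
proof -
  have "set_integrable lborel {\<alpha>..\<beta>} f"
    by (rule set_integrable_subset[OF assms(1)]) (use assms in auto)
  then show "f integrable_on {\<alpha>..\<beta>}" "(LBINT u:{\<alpha>..\<beta>}. f u) = integral {\<alpha>..\<beta>} f"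
    using set_borel_integral_eq_integral by auto
qed

lemma set_integral_mono_subinterval:
  fixes f :: "real \<Rightarrow> real"
  assumes f: "set_integrable lborel {0..\<gamma>} f" and f_nonneg: "\<And>u. u \<in> {0..\<gamma>} \<Longrightarrow> 0 \<le> f u"
    and "0 \<le> \<alpha>" "\<beta> \<le> \<gamma>"
  shows "(LBINT u:{\<alpha>..\<beta>}. f u) \<le> (LBINT u:{0..\<gamma>}. f u)"
proof (cases "\<alpha> \<le> \<beta>")
  case False
  then show ?thesis
    using set_lebesgue_integral_nonneg[of "{0..\<gamma>}" f] f_nonneg by (simp add: set_lebesgue_integral_def)
next
  case True
  note sub = set_integral_subinterval_eq_integral[OF f \<open>0 \<le> \<alpha>\<close> \<open>\<beta> \<le> \<gamma>\<close>]
  note whole = set_integral_subinterval_eq_integral[OF f order_refl order_refl]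
  have "integral {\<alpha>..\<beta>} f \<le> integral {0..\<gamma>} f"
    by (rule integral_subset_le) (use sub whole assms in auto)
  then show ?thesis using sub whole by simp
qed

lemma borel_measurable_pair_extend_by_zero:
  fixes f :: "real \<Rightarrow> 'w \<Rightarrow> real"
  assumes S: "S \<in> sets borel"
    and f: "(\<lambda>(s, w). f s w) \<in> borel_measurable (restrict_space borel S \<Otimes>\<^sub>M N)"
  shows "(\<lambda>(s, w). if s \<in> S then f s w else 0) \<in> borel_measurable (borel \<Otimes>\<^sub>M N)"
proof -
  let ?\<Omega> = "S \<times> space N"
  have "(\<lambda>z. z) \<in> measurable (restrict_space (borel \<Otimes>\<^sub>M N) ?\<Omega>) (restrict_space borel S \<Otimes>\<^sub>M N)"
  proof (subst measurable_pair_iff, intro conjI)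
    show "fst \<circ> (\<lambda>z. z) \<in> measurable (restrict_space (borel \<Otimes>\<^sub>M N) ?\<Omega>) (restrict_space borel S)"
      by (rule measurable_restrict_space2)
        (auto intro!: measurable_restrict_space1 simp: space_restrict_space space_pair_measure)
    show "snd \<circ> (\<lambda>z. z) \<in> measurable (restrict_space (borel \<Otimes>\<^sub>M N) ?\<Omega>) N"
      by (auto intro!: measurable_restrict_space1)
  qed
  from measurable_comp[OF this f]
  have "(\<lambda>(s, w). f s w) \<in> borel_measurable (restrict_space (borel \<Otimes>\<^sub>M N) ?\<Omega>)"
    by (simp add: o_def)
  then have "(\<lambda>z. if z \<in> ?\<Omega> then (\<lambda>(s, w). f s w) z else 0) \<in> borel_measurable (borel \<Otimes>\<^sub>M N)"
    using S by (subst (asm) measurable_restrict_space_iff) (auto simp: space_pair_measure)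
  then show ?thesis
    by (rule measurable_cong[THEN iffD1, rotated]) (auto simp: space_pair_measure split: if_splits)
qed

lemma measurable_pair_measure_mono_right:
  assumes "sets N \<subseteq> sets M" "space N = space M" "h \<in> measurable (K \<Otimes>\<^sub>M N) L"
  shows "h \<in> measurable (K \<Otimes>\<^sub>M M) L"
proof -
  have "(\<lambda>w. w) \<in> measurable M N"
    by (rule measurableI) (use assms(1,2) sets.sets_into_space in auto)
  then have "(\<lambda>z. z) \<in> measurable (K \<Otimes>\<^sub>M M) (K \<Otimes>\<^sub>M N)"
    using measurable_comp[OF measurable_snd] by (subst measurable_pair_iff) (simp add: o_def)
  from measurable_comp[OF this assms(3)] show ?thesis by (simp add: o_def)
qed

lemma progressive_extend_by_zero_measurable:
  assumes f: "progressive F f"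
    and F: "\<And>s. sets (F s) \<subseteq> sets M" "\<And>s. space (F s) = space M"
  shows "(\<lambda>z. if 0 \<le> fst z then f (fst z) (snd z) else 0) \<in> borel_measurable (borel \<Otimes>\<^sub>M M)"
proof (rule borel_measurable_LIMSEQ_real)
  let ?g = "\<lambda>n::nat. \<lambda>z. if fst z \<in> {0..real n} then f (fst z) (snd z) else 0"
  show "?g n \<in> borel_measurable (borel \<Otimes>\<^sub>M M)" for n
  proof -
    have "(\<lambda>(s, w). f s w) \<in> borel_measurable (restrict_space borel {0..real n} \<Otimes>\<^sub>M F (real n))"
      using f unfolding progressive_def by auto
    from measurable_pair_measure_mono_right[OF F borel_measurable_pair_extend_by_zero[OF _ this]]
    show ?thesis by (simp add: case_prod_beta')
  qed
  show "(\<lambda>n. ?g n z) \<longlonglongrightarrow> (if 0 \<le> fst z then f (fst z) (snd z) else 0)" for z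
  proof (rule tendsto_eventually)
    obtain n :: nat where "fst z \<le> real n" using real_arch_simple by blast
    then show "\<forall>\<^sub>F k in sequentially. ?g k z = (if 0 \<le> fst z then f (fst z) (snd z) else 0)"
      by (auto simp: eventually_sequentially intro!: exI[of _ n])
  qed
qed

lemma progressive_measurable_at:
  assumes "progressive F f" "0 \<le> s"
  shows "f s \<in> borel_measurable (F s)"
proof -
  have "(\<lambda>(r, w). f r w) \<in> borel_measurable (restrict_space borel {0..s} \<Otimes>\<^sub>M F s)"
    using assms unfolding progressive_def by auto
  moreover have "(\<lambda>w. (s, w)) \<in> measurable (F s) (restrict_space borel {0..s} \<Otimes>\<^sub>M F s)"
    using assms(2) by (intro measurable_Pair measurable_const) (auto simp: space_restrict_space)
  ultimately have "(\<lambda>(r, w). f r w) \<circ> (\<lambda>w. (s, w)) \<in> borel_measurable (F s)"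
    by (rule measurable_comp[rotated])
  then show ?thesis by (simp add: o_def)
qed

lemma progressive_set_integral_measurable:
  assumes "progressive F f" "0 \<le> t" "t \<le> s"
  shows "(\<lambda>w. LBINT u:{t..s}. f u w) \<in> borel_measurable (F s)"
proof -
  define g where "g = (\<lambda>(u, w). if u \<in> {0..s} then f u w else 0)"
  have "(\<lambda>(r, w). f r w) \<in> borel_measurable (restrict_space borel {0..s} \<Otimes>\<^sub>M F s)"
    using assms unfolding progressive_def by auto
  from borel_measurable_pair_extend_by_zero[OF _ this]
  have "g \<in> borel_measurable (borel \<Otimes>\<^sub>M F s)" by (simp add: g_def)
  then have [measurable]: "(\<lambda>z. g (snd z, fst z)) \<in> borel_measurable (F s \<Otimes>\<^sub>M lborel)"
    using measurable_comp[of "\<lambda>z. (snd z, fst z)" "F s \<Otimes>\<^sub>M lborel" "borel \<Otimes>\<^sub>M F s" g]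
    by (simp add: o_def)
  have "(\<lambda>w. LBINT u:{t..s}. f u w) = (\<lambda>w. \<integral> u. indicator {t..s} u * g (u, w) \<partial>lborel)"
    using assms by (auto simp: set_lebesgue_integral_def indicator_def fun_eq_iff g_def
      intro!: Bochner_Integration.integral_cong)
  then show ?thesis by simp
qed

lemma (in sigma_finite_measure) nn_integral_indicator_lborel_swap:
  assumes B: "B \<in> sets M" and f: "(\<lambda>(s, w). f s w) \<in> borel_measurable (lborel \<Otimes>\<^sub>M M)"
  shows "(\<integral>\<^sup>+ w. indicator B w * (\<integral>\<^sup>+ s. f s w \<partial>lborel) \<partial>M)
    = (\<integral>\<^sup>+ s. \<integral>\<^sup>+ w. indicator B w * f s w \<partial>M \<partial>lborel)"
proof -
  interpret lborel_M: pair_sigma_finite lborel M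
    by (intro pair_sigma_finite.intro lborel.sigma_finite_measure_axioms sigma_finite_measure_axioms)
  have "(\<integral>\<^sup>+ w. indicator B w * (\<integral>\<^sup>+ s. f s w \<partial>lborel) \<partial>M)
      = (\<integral>\<^sup>+ w. \<integral>\<^sup>+ s. indicator B w * f s w \<partial>lborel \<partial>M)"
    using measurable_Pair1[OF f] by (intro nn_integral_cong nn_integral_cmult[symmetric]) simp
  also have "\<dots> = (\<integral>\<^sup>+ s. \<integral>\<^sup>+ w. indicator B w * f s w \<partial>M \<partial>lborel)"
  proof -
    have "(\<lambda>(s, w). indicator B w * f s w) = (\<lambda>z. indicator B (snd z) * (\<lambda>(s, w). f s w) z)"
      by auto
    then have "(\<lambda>(s, w). indicator B w * f s w) \<in> borel_measurable (lborel \<Otimes>\<^sub>M M)"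
      using f B by simp
    from lborel_M.Fubini'[OF this] show ?thesis by simp
  qed
  finally show ?thesis .
qed

lemma conjugate_exponent_gt_1:
  fixes p q :: real
  assumes "1 < p" "1 / p + 1 / q = 1"
  shows "1 < q"
proof -
  have "1 / q = 1 - 1 / p" using assms by simp
  moreover have "0 < 1 - 1 / p" "1 - 1 / p < 1" using assms by auto
  ultimately have "0 < 1 / q" "1 / q < 1" by auto
  then show ?thesis by (simp add: divide_less_eq_1 split: if_splits)
qed

lemma ennreal_Youngs_inequality:
  fixes p q u v :: real
  assumes "1 < p" "1 < q" "1 / p + 1 / q = 1" "0 \<le> u" "0 \<le> v"
  shows "ennreal (u * v) \<le> ennreal (1 / p) * ennreal (u powr p) + ennreal (1 / q) * ennreal (v powr q)"
proof -
  have "u * v \<le> 1 / p * u powr p + 1 / q * v powr q"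
    using Youngs_inequality[OF assms] by simp
  then have "ennreal (u * v) \<le> ennreal (1 / p * u powr p + 1 / q * v powr q)"
    by (rule ennreal_leI)
  also have "\<dots> = ennreal (1 / p * u powr p) + ennreal (1 / q * v powr q)"
    using assms by (intro ennreal_plus) auto
  also have "\<dots> = ennreal (1 / p) * ennreal (u powr p) + ennreal (1 / q) * ennreal (v powr q)"
    using assms by (simp add: ennreal_mult[symmetric])
  finally show ?thesis .
qed

lemma exponent_split_le:
  fixes l \<theta> D A A' :: real
  assumes "0 \<le> l" "0 \<le> D" "D \<le> A" "A \<le> A'"
  shows "l * D \<le> \<theta> / 2 * A + max (l - \<theta> / 2) 0 * A'"
proof -
  have "l * D \<le> l * A" using assms by (simp add: mult_left_mono)
  also have "\<dots> = \<theta> / 2 * A + (l - \<theta> / 2) * A" by (simp add: algebra_simps)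
  also have "(l - \<theta> / 2) * A \<le> max (l - \<theta> / 2) 0 * A"
    using assms by (intro mult_right_mono) auto
  also have "\<dots> \<le> max (l - \<theta> / 2) 0 * A'"
    using assms by (intro mult_left_mono) auto
  finally show ?thesis by simp
qed

section \<open>The stochastic Gronwall inequality for a general filtration\<close>

locale stochastic_gronwall = prob_space M + filtration "space M" F
  for M :: "'w measure" and F :: "real \<Rightarrow> 'w measure" +
  fixes \<tau> \<xi> :: "'w \<Rightarrow> real" and a x :: "real \<Rightarrow> 'w \<Rightarrow> real" and p q l \<theta> :: real
  assumes sets_F_subset: "\<And>s. sets (F s) \<subseteq> sets M"
    and p_gt: "p > 1" and l_nonneg: "l \<ge> 0" and pq: "1 / p + 1 / q = 1"
    and tau_nonneg: "\<forall>w\<in>space M. 0 \<le> \<tau> w"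
    and tau_stop: "stopping_time F \<tau>"
    and xi_nonneg: "\<forall>w\<in>space M. 0 \<le> \<xi> w"
    and a_nonneg: "\<forall>t\<ge>0. \<forall>w\<in>space M. 0 \<le> a t w" and a_prog: "progressive F a"
    and x_nonneg: "\<forall>t\<ge>0. \<forall>w\<in>space M. 0 \<le> x t w" and x_prog: "progressive F x"
    and a_locally_integrable: "AE w in M. \<forall>t\<ge>0. set_integrable lborel {0..t} (\<lambda>s. a s w)"
    and exp_moment_A_tau: "(\<integral>\<^sup>+ w. ennreal (exp (q / 2 * max (2 * l - \<theta>) 0 *
                 (LBINT s:{0..\<tau> w}. a s w))) \<partial>M) < \<infinity>"
    and xi_meas: "\<xi> \<in> borel_measurable (pre_sigma \<tau>)"
    and weighted_moment_xi: "(\<integral>\<^sup>+ w. ennreal (exp (p / 2 * \<theta> * (LBINT s:{0..\<tau> w}. a s w)) * \<bar>\<xi> w\<bar> powr p) \<partial>M) < \<infinity>"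
    and x_adapted: "adapted F x"
    and weighted_integral_x_finite: "AE w in M. (\<integral>\<^sup>+ t\<in>{0..\<tau> w}.
                   ennreal (a t w * exp (\<theta> / 2 * (LBINT s:{0..t}. a s w)) * \<bar>x t w\<bar>) \<partial>lborel) < \<infinity>"
    and weighted_moment_x: "(\<integral>\<^sup>+ w. ennreal ((enn2real (\<integral>\<^sup>+ t\<in>{0..\<tau> w}.
                   ennreal (a t w * exp (\<theta> / 2 * (LBINT s:{0..t}. a s w)) * \<bar>x t w\<bar>) \<partial>lborel)) powr p) \<partial>M) < \<infinity>"
    and x_le_cond_exp_hyp: "\<forall>t\<ge>0. AE w in M. x t w \<le>
               real_cond_exp M (F t) (\<lambda>w. \<xi> w + l * (LBINT s:{min t (\<tau> w)..\<tau> w}. a s w * x s w)) w"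
begin

lemma sigma_finite_subalgebra_F: "sigma_finite_subalgebra M (F s)"
proof -
  have "subalgebra M (F s)"
    unfolding subalgebra_def using space_F sets_F_subset by auto
  then have "finite_measure_subalgebra M (F s)"
    by (intro finite_measure_subalgebra.intro finite_measure_subalgebra_axioms.intro finite_measure_axioms)
  then show ?thesis by (rule finite_measure_subalgebra_is_sigma_finite)
qed

lemma q_gt_1: "q > 1"
  using conjugate_exponent_gt_1[OF p_gt pq] .

lemma tau_measurable[measurable]: "\<tau> \<in> borel_measurable M"
  by (rule measurable_stopping_time[OF tau_stop sets_F_subset space_F])

lemma xi_measurable[measurable]: "\<xi> \<in> borel_measurable M"
proof -
  have "sets (pre_sigma \<tau>) \<subseteq> sets M"
  proof
    fix A assume A: "A \<in> sets (pre_sigma \<tau>)"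
    have slice: "{w \<in> A. \<tau> w \<le> real n} \<in> sets M" for n
      using sets_pre_sigmaD[OF tau_stop A, of "real n"] sets_F_subset by auto
    have "A = (\<Union>n. {w \<in> A. \<tau> w \<le> real n})"
      by (auto intro: real_arch_simple)
    also have "\<dots> \<in> sets M" using slice by auto
    finally show "A \<in> sets M" .
  qed
  then show ?thesis
    using xi_meas space_pre_sigma by (auto simp: measurable_def)
qed

text \<open>Progressivity constrains \<open>a\<close> and \<open>x\<close> only at nonnegative times; extended by zero they
  become jointly measurable in time and path.\<close>

definition a_ext :: "real \<Rightarrow> 'w \<Rightarrow> real" where "a_ext s w = (if 0 \<le> s then a s w else 0)"
definition x_ext :: "real \<Rightarrow> 'w \<Rightarrow> real" where "x_ext s w = (if 0 \<le> s then x s w else 0)"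

lemma a_ext_measurable[measurable (raw)]:
  assumes "f \<in> borel_measurable N" "g \<in> measurable N M"
  shows "(\<lambda>y. a_ext (f y) (g y)) \<in> borel_measurable N"
proof -
  have joint: "(\<lambda>z. a_ext (fst z) (snd z)) \<in> borel_measurable (borel \<Otimes>\<^sub>M M)"
    using progressive_extend_by_zero_measurable[OF a_prog sets_F_subset space_F] by (simp add: a_ext_def)
  have "(\<lambda>y. (f y, g y)) \<in> measurable N (borel \<Otimes>\<^sub>M M)" using assms by measurable
  from measurable_comp[OF this joint] show ?thesis by (simp add: o_def)
qed

lemma x_ext_measurable[measurable (raw)]:
  assumes "f \<in> borel_measurable N" "g \<in> measurable N M"
  shows "(\<lambda>y. x_ext (f y) (g y)) \<in> borel_measurable N"
proof -
  have joint: "(\<lambda>z. x_ext (fst z) (snd z)) \<in> borel_measurable (borel \<Otimes>\<^sub>M M)"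
    using progressive_extend_by_zero_measurable[OF x_prog sets_F_subset space_F] by (simp add: x_ext_def)
  have "(\<lambda>y. (f y, g y)) \<in> measurable N (borel \<Otimes>\<^sub>M M)" using assms by measurable
  from measurable_comp[OF this joint] show ?thesis by (simp add: o_def)
qed

lemma set_integral_a_ext_measurable[measurable (raw)]:
  assumes [measurable]: "\<alpha> \<in> borel_measurable N" "\<beta> \<in> borel_measurable N" "g \<in> measurable N M"
  shows "(\<lambda>y. LBINT u:{\<alpha> y..\<beta> y}. a_ext u (g y)) \<in> borel_measurable N"
proof -
  have "(\<lambda>y. LBINT u:{\<alpha> y..\<beta> y}. a_ext u (g y))
     = (\<lambda>y. \<integral> u. indicator {z. \<alpha> (fst z) \<le> snd z \<and> snd z \<le> \<beta> (fst z)} (y, u) * a_ext u (g y) \<partial>lborel)"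
    by (auto simp: set_lebesgue_integral_def indicator_def fun_eq_iff)
  then show ?thesis by simp
qed

lemma nn_integral_a_x_ext_measurable[measurable (raw)]:
  assumes [measurable]: "\<alpha> \<in> borel_measurable N" "\<beta> \<in> borel_measurable N" "g \<in> measurable N M"
  shows "(\<lambda>y. \<integral>\<^sup>+ u. ennreal (a_ext u (g y) * x_ext u (g y)) * indicator {\<alpha> y..\<beta> y} u \<partial>lborel)
    \<in> borel_measurable N"
proof -
  have "(\<lambda>y. \<integral>\<^sup>+ u. ennreal (a_ext u (g y) * x_ext u (g y)) * indicator {\<alpha> y..\<beta> y} u \<partial>lborel)
     = (\<lambda>y. \<integral>\<^sup>+ u. ennreal (a_ext u (g y) * x_ext u (g y)) *
          indicator {z. \<alpha> (fst z) \<le> snd z \<and> snd z \<le> \<beta> (fst z)} (y, u) \<partial>lborel)"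
    by (auto simp: indicator_def fun_eq_iff)
  then show ?thesis by simp
qed

lemma a_ext_nonneg: "w \<in> space M \<Longrightarrow> 0 \<le> a_ext s w"
  using a_nonneg by (simp add: a_ext_def)

lemma x_ext_nonneg: "w \<in> space M \<Longrightarrow> 0 \<le> x_ext s w"
  using x_nonneg by (simp add: x_ext_def)

lemma set_integral_a_ext: "S \<subseteq> {0..} \<Longrightarrow> (LBINT u:S. a u w) = (LBINT u:S. a_ext u w)"
  unfolding set_lebesgue_integral_def
  by (rule Bochner_Integration.integral_cong) (auto simp: indicator_def a_ext_def)

definition J :: "'w \<Rightarrow> ennreal" where
  "J w = (\<integral>\<^sup>+ s\<in>{0..\<tau> w}. ennreal (a s w * exp (\<theta> / 2 * (LBINT u:{0..s}. a u w)) * \<bar>x s w\<bar>) \<partial>lborel)"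

definition integrable_path :: "'w \<Rightarrow> bool" where
  "integrable_path w \<longleftrightarrow> w \<in> space M \<and> (\<forall>s\<ge>0. set_integrable lborel {0..s} (\<lambda>u. a u w)) \<and> J w < \<infinity>"

lemma AE_integrable_path: "AE w in M. integrable_path w"
  using a_locally_integrable weighted_integral_x_finite AE_space by eventually_elim (auto simp: integrable_path_def J_def)

lemma integrable_path_space: "integrable_path w \<Longrightarrow> w \<in> space M"
  by (simp add: integrable_path_def)

lemma integrable_path_set_integrable:
  assumes "integrable_path w" "0 \<le> s"
  shows "set_integrable lborel {0..s} (\<lambda>u. a_ext u w)"
proof -
  have "(\<lambda>u. indicator {0..s} u *\<^sub>R a u w) = (\<lambda>u. indicator {0..s} u *\<^sub>R a_ext u w)"
    by (auto simp: indicator_def a_ext_def fun_eq_iff)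
  then show ?thesis
    using assms unfolding integrable_path_def set_integrable_def by metis
qed

definition A_tau :: "'w \<Rightarrow> real" where "A_tau w = (LBINT s:{0..\<tau> w}. a s w)"

definition tail :: "real \<Rightarrow> 'w \<Rightarrow> ennreal" where
  "tail s w = (\<integral>\<^sup>+ r. ennreal (a_ext r w * x_ext r w) * indicator {min s (\<tau> w)..\<tau> w} r \<partial>lborel)"

text \<open>Splitting the rate as \<open>l = \<theta>/2 + (l - \<theta>/2)\<close>, the part \<open>\<theta>/2\<close> is absorbed by the weights
  in the hypotheses on \<open>\<xi>\<close> and on \<open>x\<close>, and the remainder \<open>\<kappa> \<ge> l - \<theta>/2\<close> by the exponential
  moment of \<open>A(\<tau>)\<close>, since \<open>q \<kappa> = q/2 (2l - \<theta>)\<^sup>+\<close>.\<close>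

definition \<kappa> :: real where "\<kappa> = max (l - \<theta> / 2) 0"

lemma A_tau_measurable[measurable]: "A_tau \<in> borel_measurable M"
proof -
  have "A_tau = (\<lambda>w. LBINT s:{0..\<tau> w}. a_ext s w)"
    unfolding A_tau_def by (intro ext set_integral_a_ext) auto
  then show ?thesis by simp
qed

lemma J_measurable[measurable]: "J \<in> borel_measurable M"
proof -
  have "ennreal (a s w * exp (\<theta> / 2 * (LBINT u:{0..s}. a u w)) * \<bar>x s w\<bar>) * indicator {0..\<tau> w} s
      = ennreal (a_ext s w * exp (\<theta> / 2 * (LBINT u:{0..s}. a_ext u w)) * \<bar>x_ext s w\<bar>) *
          indicator {z. 0 \<le> snd z \<and> snd z \<le> \<tau> (fst z)} (w, s)" for w s
    using set_integral_a_ext[of "{0..s}" w]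
    by (cases "s \<in> {0..\<tau> w}") (auto simp: x_ext_def indicator_def a_ext_def[of s])
  then have "J = (\<lambda>w. \<integral>\<^sup>+ s. ennreal (a_ext s w * exp (\<theta> / 2 * (LBINT u:{0..s}. a_ext u w)) * \<bar>x_ext s w\<bar>) *
      indicator {z. 0 \<le> snd z \<and> snd z \<le> \<tau> (fst z)} (w, s) \<partial>lborel)"
    unfolding J_def by simp
  then show ?thesis by simp
qed

lemma tail_measurable[measurable (raw)]:
  assumes "f \<in> borel_measurable N" "g \<in> measurable N M"
  shows "(\<lambda>y. tail (f y) (g y)) \<in> borel_measurable N"
  unfolding tail_def using assms by measurable

lemma nn_integral_exp_A_tau_finite: "(\<integral>\<^sup>+ w. ennreal (exp (q * \<kappa> * A_tau w)) \<partial>M) < \<infinity>"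
proof -
  have eq: "q / 2 * max (2 * l - \<theta>) 0 = q * \<kappa>"
    by (auto simp: \<kappa>_def max_def algebra_simps)
  show ?thesis using exp_moment_A_tau unfolding eq A_tau_def .
qed

lemma nn_integral_J_powr_finite: "(\<integral>\<^sup>+ w. ennreal (enn2real (J w) powr p) \<partial>M) < \<infinity>"
  using weighted_moment_x by (simp add: J_def)

lemma hyp_integrand_nonneg:
  assumes "0 \<le> s" "w \<in> space M"
  shows "0 \<le> \<xi> w + l * (LBINT r:{min s (\<tau> w)..\<tau> w}. a r w * x r w)"
proof -
  have "0 \<le> (LBINT r:{min s (\<tau> w)..\<tau> w}. a r w * x r w)"
    by (rule set_lebesgue_integral_nonneg) (use assms a_nonneg x_nonneg tau_nonneg in auto)
  then show ?thesis using xi_nonneg assms l_nonneg by auto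
qed

lemma ennreal_hyp_integrand_le:
  assumes "0 \<le> s" and w: "w \<in> space M"
  shows "ennreal (\<xi> w + l * (LBINT r:{min s (\<tau> w)..\<tau> w}. a r w * x r w)) \<le> ennreal (\<xi> w) + ennreal l * tail s w"
proof -
  let ?S = "{min s (\<tau> w)..\<tau> w}"
  have S_nonneg: "r \<in> ?S \<Longrightarrow> 0 \<le> r" for r using assms tau_nonneg by auto
  have ax_nonneg: "r \<in> ?S \<Longrightarrow> 0 \<le> a r w * x r w" for r
    using S_nonneg a_nonneg x_nonneg w by auto
  have L0: "0 \<le> (LBINT r:?S. a r w * x r w)"
    by (rule set_lebesgue_integral_nonneg) (rule ax_nonneg)
  then have "0 \<le> \<xi> w" "0 \<le> l * (LBINT r:?S. a r w * x r w)"
    using xi_nonneg w l_nonneg by auto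
  with L0 have "ennreal (\<xi> w + l * (LBINT r:?S. a r w * x r w))
      = ennreal (\<xi> w) + ennreal l * ennreal (LBINT r:?S. a r w * x r w)"
    using l_nonneg by (simp add: ennreal_plus ennreal_mult)
  also have "ennreal (LBINT r:?S. a r w * x r w) \<le> (\<integral>\<^sup>+ r. ennreal (a r w * x r w) * indicator ?S r \<partial>lborel)"
    by (rule ennreal_set_integral_le_nn_integral[OF ax_nonneg])
  also have "\<dots> = tail s w"
    unfolding tail_def
    by (rule nn_integral_cong) (use S_nonneg in \<open>auto simp: a_ext_def x_ext_def indicator_def\<close>)
  finally show ?thesis by (simp add: add_left_mono mult_left_mono)
qed

end

locale stochastic_gronwall_at = stochastic_gronwall M F \<tau> \<xi> a x p q l \<theta>
  for M :: "'w measure" and F \<tau> \<xi> a x p q l \<theta> +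
  fixes t :: real
  assumes t_nonneg: "0 \<le> t"
begin

definition W :: "real \<Rightarrow> 'w \<Rightarrow> real" where
  "W s w = exp (l * (LBINT u:{t..s}. a_ext u w))"

definition weight :: "real \<Rightarrow> 'w \<Rightarrow> ennreal" where
  "weight s w = ennreal (l * a_ext s w * W s w) * indicator {t..\<tau> w} s"

definition U :: "'w \<Rightarrow> ennreal" where
  "U w = (\<integral>\<^sup>+ r. ennreal (l * a_ext r w * x_ext r w * (W r w - 1)) * indicator {t..\<tau> w} r \<partial>lborel)"

definition V :: "'w \<Rightarrow> ennreal" where
  "V w = (\<integral>\<^sup>+ r. ennreal (l * a_ext r w * x_ext r w) * indicator {t..\<tau> w} r \<partial>lborel)"

definition E :: "'w \<Rightarrow> real" where
  "E w = exp (l * (LBINT s:{min t (\<tau> w)..\<tau> w}. a s w))"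

lemma W_measurable[measurable (raw)]:
  assumes "f \<in> borel_measurable N" "g \<in> measurable N M"
  shows "(\<lambda>y. W (f y) (g y)) \<in> borel_measurable N"
  unfolding W_def using assms by measurable

lemma weight_measurable[measurable (raw)]:
  assumes [measurable]: "f \<in> borel_measurable N" "g \<in> measurable N M"
  shows "(\<lambda>y. weight (f y) (g y)) \<in> borel_measurable N"
proof -
  have "(\<lambda>y. weight (f y) (g y)) = (\<lambda>y. ennreal (l * a_ext (f y) (g y) * W (f y) (g y)) *
      indicator {y. t \<le> f y \<and> f y \<le> \<tau> (g y)} y)"
    by (auto simp: weight_def indicator_def fun_eq_iff)
  then show ?thesis by simp
qed

lemma U_measurable[measurable]: "U \<in> borel_measurable M"
proof -
  have "U = (\<lambda>w. \<integral>\<^sup>+ r. ennreal (l * a_ext r w * x_ext r w * (W r w - 1)) *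
      indicator {z. t \<le> snd z \<and> snd z \<le> \<tau> (fst z)} (w, r) \<partial>lborel)"
    by (auto simp: U_def indicator_def fun_eq_iff)
  then show ?thesis by simp
qed

lemma V_measurable[measurable]: "V \<in> borel_measurable M"
proof -
  have "V = (\<lambda>w. \<integral>\<^sup>+ r. ennreal (l * a_ext r w * x_ext r w) *
      indicator {z. t \<le> snd z \<and> snd z \<le> \<tau> (fst z)} (w, r) \<partial>lborel)"
    by (auto simp: V_def indicator_def fun_eq_iff)
  then show ?thesis by simp
qed

lemma W_ge_1: "w \<in> space M \<Longrightarrow> 1 \<le> W s w"
  unfolding W_def using l_nonneg a_ext_nonneg by (auto intro!: mult_nonneg_nonneg set_lebesgue_integral_nonneg)

lemma E_ge_1:
  assumes "w \<in> space M"
  shows "1 \<le> E w"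
proof -
  have "0 \<le> (LBINT s:{min t (\<tau> w)..\<tau> w}. a s w)"
  proof (rule set_lebesgue_integral_nonneg)
    fix s assume "s \<in> {min t (\<tau> w)..\<tau> w}"
    then have "0 \<le> s" using t_nonneg tau_nonneg assms by (auto simp: min_def split: if_splits)
    then show "0 \<le> a s w" using a_nonneg assms by auto
  qed
  then show ?thesis unfolding E_def using l_nonneg by simp
qed

lemma E_measurable[measurable]: "E \<in> borel_measurable M"
proof -
  have "E w = exp (l * (LBINT s:{min t (\<tau> w)..\<tau> w}. a_ext s w))" if "w \<in> space M" for w
    unfolding E_def using that t_nonneg tau_nonneg set_integral_a_ext[of "{min t (\<tau> w)..\<tau> w}" w] by auto
  moreover have "(\<lambda>w. exp (l * (LBINT s:{min t (\<tau> w)..\<tau> w}. a_ext s w))) \<in> borel_measurable M"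
    by measurable
  ultimately show ?thesis by (simp cong: measurable_cong)
qed

lemma nn_integral_growth_le:
  assumes w: "integrable_path w" and "t \<le> r"
  shows "(\<integral>\<^sup>+ s. ennreal (l * a_ext s w * W s w) * indicator {t..r} s \<partial>lborel) \<le> ennreal (W r w - 1)"
proof -
  have w_space[measurable]: "w \<in> space M" using w by (rule integrable_path_space)
  have "0 \<le> r" using t_nonneg \<open>t \<le> r\<close> by linarith
  note HK = set_integral_subinterval_eq_integral[OF integrable_path_set_integrable[OF w this] t_nonneg]
  have "(\<integral>\<^sup>+ s. ennreal (l * a_ext s w * W s w) * indicator {t..r} s \<partial>lborel)
      = (\<integral>\<^sup>+ s. ennreal (l * a_ext s w * exp (l * integral {t..s} (\<lambda>u. a_ext u w))) * indicator {t..r} s \<partial>lborel)"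
  proof (rule nn_integral_cong)
    fix s
    show "ennreal (l * a_ext s w * W s w) * indicator {t..r} s
      = ennreal (l * a_ext s w * exp (l * integral {t..s} (\<lambda>u. a_ext u w))) * indicator {t..r} s"
      using HK(2)[of s] by (cases "s \<in> {t..r}") (auto simp: W_def)
  qed
  also have "\<dots> \<le> ennreal (exp (l * integral {t..r} (\<lambda>u. a_ext u w)) - 1)"
    using assms a_ext_nonneg[OF w_space] l_nonneg t_nonneg HK(1)[of r]
    by (intro nn_integral_exp_indefinite_integral_le) (auto simp: integrable_path_def)
  also have "exp (l * integral {t..r} (\<lambda>u. a_ext u w)) = W r w"
    using HK(2)[of r] by (simp add: W_def)
  finally show ?thesis .
qed

lemma nn_integral_weight_le:
  assumes w: "integrable_path w"
  shows "(\<integral>\<^sup>+ s. weight s w \<partial>lborel) \<le> ennreal (E w - 1)"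
proof (cases "t \<le> \<tau> w")
  case True
  have "E w = W (\<tau> w) w"
    unfolding E_def W_def using True t_nonneg set_integral_a_ext[of "{t..\<tau> w}" w] by (simp add: min_def)
  then show ?thesis
    using nn_integral_growth_le[OF w True] by (simp add: weight_def)
next
  case False
  then have "weight s w = 0" for s by (simp add: weight_def)
  then show ?thesis by simp
qed


lemma nn_integral_weight_upto_le:
  assumes w: "integrable_path w"
  shows "(\<integral>\<^sup>+ s. weight s w * indicator {s..\<tau> w} r \<partial>lborel) \<le> ennreal (W r w - 1) * indicator {t..\<tau> w} r"
proof (cases "r \<in> {t..\<tau> w}")
  case True
  have "weight s w * indicator {s..\<tau> w} r = ennreal (l * a_ext s w * W s w) * indicator {t..r} s" for s
    using True by (auto simp: weight_def indicator_def)
  then show ?thesis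
    using nn_integral_growth_le[OF w, of r] True by simp
next
  case False
  have "(\<integral>\<^sup>+ s. weight s w * indicator {s..\<tau> w} r \<partial>lborel) = (\<integral>\<^sup>+ s. 0 \<partial>(lborel :: real measure))"
    by (rule nn_integral_cong) (use False in \<open>auto simp: weight_def indicator_def\<close>)
  then show ?thesis by simp
qed

lemma nn_integral_weight_tail_le:
  assumes w: "integrable_path w"
  shows "(\<integral>\<^sup>+ s. weight s w * (ennreal l * tail s w) \<partial>lborel) \<le> U w"
proof -
  have w_space[measurable]: "w \<in> space M" using w by (rule integrable_path_space)
  define K where "K s r = weight s w * indicator {s..\<tau> w} r * ennreal (l * a_ext r w * x_ext r w)" for s r
  have "(\<lambda>(s, r). K s r) = (\<lambda>z. weight (fst z) w * indicator {z. fst z \<le> snd z \<and> snd z \<le> \<tau> w} z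
      * ennreal (l * a_ext (snd z) w * x_ext (snd z) w))"
    by (auto simp: K_def fun_eq_iff indicator_def)
  then have K_measurable: "(\<lambda>(s, r). K s r) \<in> borel_measurable (lborel \<Otimes>\<^sub>M lborel)"
    by simp
  have "(\<lambda>s. indicator {s..\<tau> w} r :: ennreal) = indicator {s. s \<le> r \<and> r \<le> \<tau> w}" for r
    by (auto simp: indicator_def fun_eq_iff)
  then have [measurable]: "(\<lambda>s. indicator {s..\<tau> w} r :: ennreal) \<in> borel_measurable borel" for r
    by simp
  have "weight s w * (ennreal l * tail s w) = (\<integral>\<^sup>+ r. K s r \<partial>lborel)" for s
  proof -
    have "weight s w * (ennreal l * (ennreal (a_ext r w * x_ext r w) * indicator {min s (\<tau> w)..\<tau> w} r)) = K s r" for r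
      using l_nonneg by (auto simp: K_def weight_def indicator_def ennreal_mult' mult.assoc)
    then show ?thesis
      unfolding tail_def by (simp add: nn_integral_cmult[symmetric])
  qed
  then have "(\<integral>\<^sup>+ s. weight s w * (ennreal l * tail s w) \<partial>lborel) = (\<integral>\<^sup>+ s. \<integral>\<^sup>+ r. K s r \<partial>lborel \<partial>lborel)"
    by simp
  also have "\<dots> = (\<integral>\<^sup>+ r. \<integral>\<^sup>+ s. K s r \<partial>lborel \<partial>lborel)"
    using lborel_pair.Fubini'[OF K_measurable] by simp
  also have "\<dots> = (\<integral>\<^sup>+ r. (\<integral>\<^sup>+ s. weight s w * indicator {s..\<tau> w} r \<partial>lborel) * ennreal (l * a_ext r w * x_ext r w) \<partial>lborel)"
    unfolding K_def by (intro nn_integral_cong nn_integral_multc) measurable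
  also have "\<dots> \<le> (\<integral>\<^sup>+ r. ennreal (W r w - 1) * indicator {t..\<tau> w} r * ennreal (l * a_ext r w * x_ext r w) \<partial>lborel)"
    using nn_integral_weight_upto_le[OF w] by (intro nn_integral_mono mult_right_mono) auto
  also have "\<dots> = U w"
    unfolding U_def
    using W_ge_1[OF w_space] l_nonneg a_ext_nonneg[OF w_space] x_ext_nonneg[OF w_space]
    by (intro nn_integral_cong) (simp add: ennreal_mult[symmetric] mult_ac)
  finally show ?thesis .
qed

lemma nn_integral_weight_hyp_le:
  assumes w: "integrable_path w"
  shows "(\<integral>\<^sup>+ s. weight s w * (ennreal (\<xi> w) + ennreal l * tail s w) \<partial>lborel)
    \<le> ennreal (\<xi> w) * ennreal (E w - 1) + U w"
proof -
  have [measurable]: "w \<in> space M" using w by (rule integrable_path_space)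
  have "(\<integral>\<^sup>+ s. weight s w * (ennreal (\<xi> w) + ennreal l * tail s w) \<partial>lborel)
      = ennreal (\<xi> w) * (\<integral>\<^sup>+ s. weight s w \<partial>lborel) + (\<integral>\<^sup>+ s. weight s w * (ennreal l * tail s w) \<partial>lborel)"
    by (simp add: distrib_left mult.commute nn_integral_add nn_integral_cmult)
  also have "\<dots> \<le> ennreal (\<xi> w) * ennreal (E w - 1) + U w"
    using nn_integral_weight_le[OF w] nn_integral_weight_tail_le[OF w] by (intro add_mono mult_left_mono) auto
  finally show ?thesis .
qed

lemma nn_integral_weight_x_eq:
  assumes w[measurable]: "w \<in> space M"
  shows "(\<integral>\<^sup>+ s. weight s w * ennreal (x_ext s w) \<partial>lborel) = U w + V w"
proof -
  have "weight s w * ennreal (x_ext s w)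
      = ennreal (l * a_ext s w * x_ext s w * (W s w - 1)) * indicator {t..\<tau> w} s
        + ennreal (l * a_ext s w * x_ext s w) * indicator {t..\<tau> w} s" for s
  proof -
    have "l * a_ext s w * W s w * x_ext s w = l * a_ext s w * x_ext s w * (W s w - 1) + l * a_ext s w * x_ext s w"
      by (simp add: algebra_simps)
    moreover have "0 \<le> l * a_ext s w * x_ext s w" "0 \<le> W s w - 1" "0 \<le> l * a_ext s w * W s w"
      using l_nonneg a_ext_nonneg[OF w, of s] x_ext_nonneg[OF w, of s] W_ge_1[OF w, of s] by auto
    ultimately show ?thesis
      using x_ext_nonneg[OF w, of s]
      by (auto simp: weight_def indicator_def ennreal_mult[symmetric] ennreal_plus[symmetric] simp del: ennreal_plus)
  qed
  then show ?thesis
    unfolding U_def V_def by (simp add: nn_integral_add)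
qed


lemma W_le_exp_split:
  assumes w: "integrable_path w" and s: "s \<in> {t..\<tau> w}"
  shows "W s w \<le> exp (\<theta> / 2 * (LBINT u:{0..s}. a_ext u w)) * exp (\<kappa> * A_tau w)"
proof -
  have w_space: "w \<in> space M" using w by (rule integrable_path_space)
  have "0 \<le> s" using s t_nonneg by auto
  have "l * (LBINT u:{t..s}. a_ext u w) \<le> \<theta> / 2 * (LBINT u:{0..s}. a_ext u w) + \<kappa> * A_tau w"
    unfolding \<kappa>_def A_tau_def set_integral_a_ext[of "{0..\<tau> w}" w, simplified]
  proof (rule exponent_split_le)
    show "0 \<le> (LBINT u:{t..s}. a_ext u w)"
      by (rule set_lebesgue_integral_nonneg) (rule a_ext_nonneg[OF w_space])
    show "(LBINT u:{t..s}. a_ext u w) \<le> (LBINT u:{0..s}. a_ext u w)"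
      using integrable_path_set_integrable[OF w \<open>0 \<le> s\<close>] a_ext_nonneg[OF w_space] t_nonneg
      by (intro set_integral_mono_subinterval) auto
    show "(LBINT u:{0..s}. a_ext u w) \<le> (LBINT u:{0..\<tau> w}. a_ext u w)"
      using integrable_path_set_integrable[OF w, of "\<tau> w"] a_ext_nonneg[OF w_space] s t_nonneg
      by (intro set_integral_mono_subinterval) auto
  qed (rule l_nonneg)
  then show ?thesis
    unfolding W_def by (simp add: exp_add[symmetric])
qed

lemma nn_integral_weight_x_le_J:
  assumes w: "integrable_path w"
  shows "(\<integral>\<^sup>+ s. weight s w * ennreal (x_ext s w) \<partial>lborel) \<le> ennreal (l * exp (\<kappa> * A_tau w)) * J w"
proof -
  have w_space[measurable]: "w \<in> space M" using w by (rule integrable_path_space)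
  define A' where "A' s = (LBINT u:{0..s}. a_ext u w)" for s
  define j where "j s = ennreal (a_ext s w * exp (\<theta> / 2 * A' s) * x_ext s w) * indicator {0..\<tau> w} s" for s
  have J_eq: "J w = (\<integral>\<^sup>+ s. j s \<partial>lborel)"
    unfolding J_def
  proof (rule nn_integral_cong)
    fix s
    show "ennreal (a s w * exp (\<theta> / 2 * (LBINT u:{0..s}. a u w)) * \<bar>x s w\<bar>) * indicator {0..\<tau> w} s = j s"
      using set_integral_a_ext[of "{0..s}" w] x_nonneg w_space
      by (cases "s \<in> {0..\<tau> w}") (auto simp: j_def A'_def a_ext_def[of s] x_ext_def)
  qed
  have "weight s w * ennreal (x_ext s w) \<le> ennreal (l * exp (\<kappa> * A_tau w)) * j s" for s
  proof (cases "s \<in> {t..\<tau> w}")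
    case True
    have "l * a_ext s w * W s w * x_ext s w
        \<le> l * a_ext s w * (exp (\<theta> / 2 * A' s) * exp (\<kappa> * A_tau w)) * x_ext s w"
      using W_le_exp_split[OF w True] l_nonneg a_ext_nonneg[OF w_space, of s] x_ext_nonneg[OF w_space, of s]
      unfolding A'_def by (intro mult_right_mono mult_left_mono) auto
    then show ?thesis
      using True t_nonneg l_nonneg a_ext_nonneg[OF w_space, of s] x_ext_nonneg[OF w_space, of s]
        W_ge_1[OF w_space, of s]
      by (auto simp: weight_def j_def ennreal_mult[symmetric] mult_ac intro!: ennreal_leI)
  qed (simp add: weight_def)
  then have "(\<integral>\<^sup>+ s. weight s w * ennreal (x_ext s w) \<partial>lborel)
      \<le> (\<integral>\<^sup>+ s. ennreal (l * exp (\<kappa> * A_tau w)) * j s \<partial>lborel)"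
    by (intro nn_integral_mono)
  also have "\<dots> = ennreal (l * exp (\<kappa> * A_tau w)) * J w"
    unfolding J_eq j_def A'_def by (rule nn_integral_cmult) measurable
  finally show ?thesis .
qed


lemma indicator_weight_measurable:
  assumes B: "B \<in> sets (F t)" and "t \<le> s"
  shows "(\<lambda>w. indicator B w * weight s w) \<in> borel_measurable (F s)"
proof -
  have "0 \<le> s" using t_nonneg \<open>t \<le> s\<close> by simp
  have [measurable]: "B \<in> sets (F s)" using sets_F_mono[OF \<open>t \<le> s\<close>] B by auto
  have [measurable]: "a s \<in> borel_measurable (F s)"
    by (rule progressive_measurable_at[OF a_prog \<open>0 \<le> s\<close>])
  have [measurable]: "(\<lambda>w. LBINT u:{t..s}. a u w) \<in> borel_measurable (F s)"
    by (rule progressive_set_integral_measurable[OF a_prog t_nonneg \<open>t \<le> s\<close>])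
  have [measurable]: "Measurable.pred (F s) (\<lambda>w. \<tau> w < s)"
    by (rule stopping_time_less_const[OF tau_stop])
  have "(\<lambda>w. indicator B w * (ennreal (l * a s w * exp (l * (LBINT u:{t..s}. a u w))) *
      indicator {w. \<not> \<tau> w < s} w)) \<in> borel_measurable (F s)"
    by measurable
  then show ?thesis
    by (rule measurable_cong[THEN iffD1, rotated])
      (use \<open>t \<le> s\<close> \<open>0 \<le> s\<close> set_integral_a_ext[of "{t..s}"] t_nonneg in
        \<open>auto simp: weight_def W_def a_ext_def indicator_def\<close>)
qed

lemma tail_eq_V:
  assumes "w \<in> space M"
  shows "ennreal l * tail t w = V w"
proof (cases "t \<le> \<tau> w")
  case True
  then have "ennreal l * tail t w
      = (\<integral>\<^sup>+ r. ennreal l * (ennreal (a_ext r w * x_ext r w) * indicator {t..\<tau> w} r) \<partial>lborel)"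
    unfolding tail_def using assms by (subst nn_integral_cmult) (auto simp: min_def)
  also have "\<dots> = V w"
    unfolding V_def using l_nonneg by (intro nn_integral_cong) (simp add: ennreal_mult' mult.assoc)
  finally show ?thesis .
next
  case False
  then have "tail t w = (\<integral>\<^sup>+ r. ennreal (a_ext r w * x_ext r w) * indicator {\<tau> w} r \<partial>lborel)"
    unfolding tail_def by simp
  also have "\<dots> = 0" by (simp add: nn_integral_indicator_singleton)
  finally have "tail t w = 0" .
  moreover have "V w = 0"
    unfolding V_def using False by (simp add: indicator_def)
  ultimately show ?thesis by simp
qed

lemma set_nn_integral_x_le:
  assumes B: "B \<in> sets (F t)"
  shows "(\<integral>\<^sup>+ w. indicator B w * ennreal (x t w) \<partial>M) \<le> (\<integral>\<^sup>+ w. indicator B w * (ennreal (\<xi> w) + V w) \<partial>M)"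
proof -
  have "(\<integral>\<^sup>+ w. indicator B w * ennreal (x t w) \<partial>M)
      \<le> (\<integral>\<^sup>+ w. indicator B w * ennreal (\<xi> w + l * (LBINT s:{min t (\<tau> w)..\<tau> w}. a s w * x s w)) \<partial>M)"
    by (rule sigma_finite_subalgebra.nn_integral_mult_le_of_AE_le_real_cond_exp[OF sigma_finite_subalgebra_F])
      (use x_le_cond_exp_hyp t_nonneg x_nonneg hyp_integrand_nonneg B in auto)
  also have "\<dots> \<le> (\<integral>\<^sup>+ w. indicator B w * (ennreal (\<xi> w) + V w) \<partial>M)"
    using ennreal_hyp_integrand_le[OF t_nonneg] tail_eq_V by (intro nn_integral_mono mult_left_mono) auto
  finally show ?thesis .
qed


lemma set_nn_integral_weight_x_le_at:
  assumes B: "B \<in> sets (F t)"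
  shows "(\<integral>\<^sup>+ w. indicator B w * (weight s w * ennreal (x_ext s w)) \<partial>M)
    \<le> (\<integral>\<^sup>+ w. indicator B w * (weight s w * (ennreal (\<xi> w) + ennreal l * tail s w)) \<partial>M)"
proof (cases "t \<le> s")
  case True
  then have "0 \<le> s" using t_nonneg by simp
  have "(\<integral>\<^sup>+ w. indicator B w * (weight s w * ennreal (x_ext s w)) \<partial>M)
      = (\<integral>\<^sup>+ w. (indicator B w * weight s w) * ennreal (x s w) \<partial>M)"
    using \<open>0 \<le> s\<close> by (simp add: x_ext_def mult.assoc)
  also have "\<dots> \<le> (\<integral>\<^sup>+ w. (indicator B w * weight s w) *
      ennreal (\<xi> w + l * (LBINT r:{min s (\<tau> w)..\<tau> w}. a r w * x r w)) \<partial>M)"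
    by (rule sigma_finite_subalgebra.nn_integral_mult_le_of_AE_le_real_cond_exp[OF sigma_finite_subalgebra_F])
      (use x_le_cond_exp_hyp \<open>0 \<le> s\<close> x_nonneg hyp_integrand_nonneg indicator_weight_measurable[OF B True] in auto)
  also have "\<dots> \<le> (\<integral>\<^sup>+ w. indicator B w * (weight s w * (ennreal (\<xi> w) + ennreal l * tail s w)) \<partial>M)"
    using ennreal_hyp_integrand_le[OF \<open>0 \<le> s\<close>] unfolding mult.assoc
    by (intro nn_integral_mono mult_left_mono) auto
  finally show ?thesis .
next
  case False
  then show ?thesis by (simp add: weight_def)
qed

lemma set_nn_integral_weight_x_le:
  assumes B: "B \<in> sets (F t)"
  shows "(\<integral>\<^sup>+ w. indicator B w * (\<integral>\<^sup>+ s. weight s w * ennreal (x_ext s w) \<partial>lborel) \<partial>M)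
    \<le> (\<integral>\<^sup>+ w. indicator B w * (\<integral>\<^sup>+ s. weight s w * (ennreal (\<xi> w) + ennreal l * tail s w) \<partial>lborel) \<partial>M)"
proof -
  have "B \<in> sets M" using B sets_F_subset by auto
  then show ?thesis
    using set_nn_integral_weight_x_le_at[OF B]
    by (simp add: nn_integral_indicator_lborel_swap nn_integral_mono)
qed


lemma nn_integral_weight_x_finite:
  "(\<integral>\<^sup>+ w. (\<integral>\<^sup>+ s. weight s w * ennreal (x_ext s w) \<partial>lborel) \<partial>M) < \<infinity>"
proof -
  have "(\<integral>\<^sup>+ w. (\<integral>\<^sup>+ s. weight s w * ennreal (x_ext s w) \<partial>lborel) \<partial>M)
      \<le> (\<integral>\<^sup>+ w. ennreal l * (ennreal (1 / p) * ennreal (enn2real (J w) powr p)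
          + ennreal (1 / q) * ennreal (exp (q * \<kappa> * A_tau w))) \<partial>M)"
  proof (rule nn_integral_mono_AE)
    show "AE w in M. (\<integral>\<^sup>+ s. weight s w * ennreal (x_ext s w) \<partial>lborel)
        \<le> ennreal l * (ennreal (1 / p) * ennreal (enn2real (J w) powr p)
          + ennreal (1 / q) * ennreal (exp (q * \<kappa> * A_tau w)))"
      using AE_integrable_path
    proof eventually_elim
      case (elim w)
      have "J w = ennreal (enn2real (J w))"
        using elim by (simp add: integrable_path_def less_top[symmetric])
      then have "ennreal (l * exp (\<kappa> * A_tau w)) * J w = ennreal l * ennreal (enn2real (J w) * exp (\<kappa> * A_tau w))"
        using l_nonneg by (metis ennreal_mult enn2real_nonneg exp_ge_zero mult.commute mult.left_commute)
      also have "\<dots> \<le> ennreal l * (ennreal (1 / p) * ennreal (enn2real (J w) powr p)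
          + ennreal (1 / q) * ennreal (exp (\<kappa> * A_tau w) powr q))"
        using p_gt q_gt_1 pq by (intro mult_left_mono ennreal_Youngs_inequality) auto
      also have "exp (\<kappa> * A_tau w) powr q = exp (q * \<kappa> * A_tau w)"
        by (simp add: exp_powr_real mult_ac)
      finally show ?case
        using nn_integral_weight_x_le_J[OF elim] by (rule order_trans[rotated])
    qed
  qed
  also have "\<dots> < \<infinity>"
    using nn_integral_J_powr_finite nn_integral_exp_A_tau_finite
    by (simp add: nn_integral_add nn_integral_cmult ennreal_mult_less_top less_top)
  finally show ?thesis .
qed

lemma E_le_exp_split:
  assumes w: "integrable_path w"
  shows "E w \<le> exp (\<theta> / 2 * A_tau w) * exp (\<kappa> * A_tau w)"
proof -
  have w_space: "w \<in> space M" using w by (rule integrable_path_space)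
  have "0 \<le> \<tau> w" using tau_nonneg w_space by simp
  have "l * (LBINT s:{min t (\<tau> w)..\<tau> w}. a s w) \<le> \<theta> / 2 * A_tau w + \<kappa> * A_tau w"
    unfolding \<kappa>_def
  proof (rule exponent_split_le[OF l_nonneg])
    show "0 \<le> (LBINT s:{min t (\<tau> w)..\<tau> w}. a s w)"
      using a_nonneg w_space t_nonneg \<open>0 \<le> \<tau> w\<close> by (intro set_lebesgue_integral_nonneg) auto
    show "(LBINT s:{min t (\<tau> w)..\<tau> w}. a s w) \<le> A_tau w"
      unfolding A_tau_def
      using w \<open>0 \<le> \<tau> w\<close> a_nonneg w_space t_nonneg
      by (intro set_integral_mono_subinterval) (auto simp: integrable_path_def)
  qed simp
  then show ?thesis
    unfolding E_def by (simp add: exp_add[symmetric])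
qed

lemma nn_integral_xi_E_finite: "(\<integral>\<^sup>+ w. ennreal (\<xi> w * E w) \<partial>M) < \<infinity>"
proof -
  have "(\<integral>\<^sup>+ w. ennreal (\<xi> w * E w) \<partial>M)
      \<le> (\<integral>\<^sup>+ w. ennreal (1 / p) * ennreal (exp (p / 2 * \<theta> * (LBINT s:{0..\<tau> w}. a s w)) * \<bar>\<xi> w\<bar> powr p)
          + ennreal (1 / q) * ennreal (exp (q * \<kappa> * A_tau w)) \<partial>M)"
  proof (rule nn_integral_mono_AE)
    show "AE w in M. ennreal (\<xi> w * E w)
        \<le> ennreal (1 / p) * ennreal (exp (p / 2 * \<theta> * (LBINT s:{0..\<tau> w}. a s w)) * \<bar>\<xi> w\<bar> powr p)
          + ennreal (1 / q) * ennreal (exp (q * \<kappa> * A_tau w))"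
      using AE_integrable_path
    proof eventually_elim
      case (elim w)
      have "0 \<le> \<xi> w" using xi_nonneg elim by (simp add: integrable_path_def)
      then have "\<xi> w * E w \<le> (\<xi> w * exp (\<theta> / 2 * A_tau w)) * exp (\<kappa> * A_tau w)"
        using E_le_exp_split[OF elim] by (simp add: mult_left_mono mult.assoc)
      then have "ennreal (\<xi> w * E w) \<le> ennreal ((\<xi> w * exp (\<theta> / 2 * A_tau w)) * exp (\<kappa> * A_tau w))"
        by (rule ennreal_leI)
      also have "\<dots> \<le> ennreal (1 / p) * ennreal ((\<xi> w * exp (\<theta> / 2 * A_tau w)) powr p)
          + ennreal (1 / q) * ennreal (exp (\<kappa> * A_tau w) powr q)"
        using p_gt q_gt_1 pq \<open>0 \<le> \<xi> w\<close> by (intro ennreal_Youngs_inequality) auto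
      also have "(\<xi> w * exp (\<theta> / 2 * A_tau w)) powr p
          = exp (p / 2 * \<theta> * (LBINT s:{0..\<tau> w}. a s w)) * \<bar>\<xi> w\<bar> powr p"
        using \<open>0 \<le> \<xi> w\<close> by (simp add: powr_mult exp_powr_real mult_ac A_tau_def)
      also have "exp (\<kappa> * A_tau w) powr q = exp (q * \<kappa> * A_tau w)"
        by (simp add: exp_powr_real mult_ac)
      finally show ?case .
    qed
  qed
  also have "\<dots> < \<infinity>"
  proof -
    have [measurable]: "(\<lambda>w. LBINT s:{0..\<tau> w}. a s w) \<in> borel_measurable M"
      using A_tau_measurable by (simp add: A_tau_def[abs_def])
    show ?thesis
      using weighted_moment_xi nn_integral_exp_A_tau_finite
      by (simp add: nn_integral_add nn_integral_cmult ennreal_mult_less_top less_top)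
  qed
  finally show ?thesis .
qed


lemma set_nn_integral_V_le:
  assumes B: "B \<in> sets (F t)"
  shows "(\<integral>\<^sup>+ w. indicator B w * V w \<partial>M) \<le> (\<integral>\<^sup>+ w. indicator B w * (ennreal (\<xi> w) * ennreal (E w - 1)) \<partial>M)"
    (is "?V \<le> ?Z")
proof -
  have [measurable]: "B \<in> sets M" using B sets_F_subset by auto
  define LHS where "LHS = (\<integral>\<^sup>+ w. indicator B w * (\<integral>\<^sup>+ s. weight s w * ennreal (x_ext s w) \<partial>lborel) \<partial>M)"
  let ?U = "\<integral>\<^sup>+ w. indicator B w * U w \<partial>M"
  have "LHS = (\<integral>\<^sup>+ w. indicator B w * U w + indicator B w * V w \<partial>M)"
    unfolding LHS_def by (intro nn_integral_cong) (simp add: nn_integral_weight_x_eq distrib_left)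
  also have "\<dots> = ?U + ?V" by (rule nn_integral_add) auto
  finally have LHS_eq: "LHS = ?U + ?V" .
  have "LHS \<le> (\<integral>\<^sup>+ w. indicator B w * (\<integral>\<^sup>+ s. weight s w * (ennreal (\<xi> w) + ennreal l * tail s w) \<partial>lborel) \<partial>M)"
    unfolding LHS_def by (rule set_nn_integral_weight_x_le[OF B])
  also have "\<dots> \<le> (\<integral>\<^sup>+ w. indicator B w * (ennreal (\<xi> w) * ennreal (E w - 1)) + indicator B w * U w \<partial>M)"
    using AE_integrable_path by (intro nn_integral_mono_AE, eventually_elim)
      (simp add: distrib_left[symmetric] mult_left_mono nn_integral_weight_hyp_le)
  also have "\<dots> = ?Z + ?U" by (rule nn_integral_add) auto
  finally have LHS_le: "LHS \<le> ?Z + ?U" .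
  have "LHS \<le> (\<integral>\<^sup>+ w. (\<integral>\<^sup>+ s. weight s w * ennreal (x_ext s w) \<partial>lborel) \<partial>M)"
    unfolding LHS_def by (intro nn_integral_mono) (simp add: indicator_def)
  then have "?U \<noteq> \<infinity>"
    using nn_integral_weight_x_finite LHS_eq by (auto simp: top_unique)
  moreover have "?U + ?V \<le> ?U + ?Z" using LHS_eq LHS_le by (simp add: add.commute)
  ultimately show ?thesis by (simp add: ennreal_add_left_cancel_le)
qed

lemma set_nn_integral_x_le_xi_E:
  assumes B: "B \<in> sets (F t)"
  shows "(\<integral>\<^sup>+ w. indicator B w * ennreal (x t w) \<partial>M) \<le> (\<integral>\<^sup>+ w. indicator B w * ennreal (\<xi> w * E w) \<partial>M)"
proof -
  have [measurable]: "B \<in> sets M" using B sets_F_subset by auto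
  have "(\<integral>\<^sup>+ w. indicator B w * ennreal (x t w) \<partial>M) \<le> (\<integral>\<^sup>+ w. indicator B w * (ennreal (\<xi> w) + V w) \<partial>M)"
    by (rule set_nn_integral_x_le[OF B])
  also have "\<dots> = (\<integral>\<^sup>+ w. indicator B w * ennreal (\<xi> w) \<partial>M) + (\<integral>\<^sup>+ w. indicator B w * V w \<partial>M)"
    by (subst nn_integral_add[symmetric]) (auto simp: distrib_left)
  also have "\<dots> \<le> (\<integral>\<^sup>+ w. indicator B w * ennreal (\<xi> w) \<partial>M)
      + (\<integral>\<^sup>+ w. indicator B w * (ennreal (\<xi> w) * ennreal (E w - 1)) \<partial>M)"
    by (rule add_left_mono[OF set_nn_integral_V_le[OF B]])
  also have "\<dots> = (\<integral>\<^sup>+ w. indicator B w * ennreal (\<xi> w) + indicator B w * (ennreal (\<xi> w) * ennreal (E w - 1)) \<partial>M)"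
    by (rule nn_integral_add[symmetric]) auto
  also have "\<dots> = (\<integral>\<^sup>+ w. indicator B w * ennreal (\<xi> w * E w) \<partial>M)"
  proof (rule nn_integral_cong)
    fix w assume "w \<in> space M"
    then have "0 \<le> \<xi> w" "0 \<le> E w - 1" using xi_nonneg E_ge_1 by auto
    then have "ennreal (\<xi> w) + ennreal (\<xi> w) * ennreal (E w - 1) = ennreal (\<xi> w + \<xi> w * (E w - 1))"
      by (simp add: ennreal_plus ennreal_mult)
    also have "\<xi> w + \<xi> w * (E w - 1) = \<xi> w * E w" by (simp add: algebra_simps)
    finally have "ennreal (\<xi> w) + ennreal (\<xi> w) * ennreal (E w - 1) = ennreal (\<xi> w * E w)" .
    then show "indicator B w * ennreal (\<xi> w) + indicator B w * (ennreal (\<xi> w) * ennreal (E w - 1))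
        = indicator B w * ennreal (\<xi> w * E w)"
      by (simp add: distrib_left[symmetric])
  qed
  finally show ?thesis .
qed

lemma x_le_real_cond_exp: "AE w in M. x t w \<le> real_cond_exp M (F t) (\<lambda>w. \<xi> w * E w) w"
proof (rule sigma_finite_subalgebra.AE_le_real_cond_exp_of_set_nn_integral_le[OF sigma_finite_subalgebra_F])
  show "x t \<in> borel_measurable (F t)" using x_adapted t_nonneg by (simp add: adapted_def)
  show "(\<lambda>w. \<xi> w * E w) \<in> borel_measurable M" by measurable
  show "0 \<le> \<xi> w * E w" if "w \<in> space M" for w
    using xi_nonneg E_ge_1[OF that] that by simp
  show "(\<integral>\<^sup>+ w. ennreal (\<xi> w * E w) \<partial>M) < \<infinity>" by (rule nn_integral_xi_E_finite)
qed (rule set_nn_integral_x_le_xi_E)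

end

lemma (in stochastic_gronwall) x_le_real_cond_exp_xi_exp:
  assumes "0 \<le> t"
  shows "AE w in M. x t w \<le>
    real_cond_exp M (F t) (\<lambda>w. \<xi> w * exp (l * (LBINT s:{min t (\<tau> w)..\<tau> w}. a s w))) w"
proof -
  interpret stochastic_gronwall_at M F \<tau> \<xi> a x p q l \<theta> t
    by unfold_locales (rule assms)
  show ?thesis using x_le_real_cond_exp by (simp add: E_def[abs_def])
qed

section \<open>Brownian filtrations\<close>

lemma bm_filtration:
  assumes bm: "brownian_motion M d B"
  shows "filtration (space M) (bm_filtration M d B)"
    and "sets (bm_filtration M d B s) \<subseteq> sets M"
proof -
  define G where "G s = (\<Inter>u\<in>{s<..}. sigma_sets (space M) (natural_sets M d B u \<union> null_sets M))" for s :: real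
  have natural_sets: "natural_sets M d B u \<subseteq> sets M" for u
    unfolding natural_sets_def
  proof (rule sets.sigma_sets_subset, safe)
    fix i and u' :: real and S :: "real set" assume "i < d" "0 \<le> u'" "S \<in> sets borel"
    moreover have "B i u' \<in> borel_measurable M" using bm \<open>i < d\<close> \<open>0 \<le> u'\<close> by (simp add: brownian_motion_def)
    ultimately show "B i u' -` S \<inter> space M \<in> sets M" by (auto intro: measurable_sets)
  qed
  have G_sets: "G s \<subseteq> sets M" for s
  proof -
    have "sigma_sets (space M) (natural_sets M d B (s + 1) \<union> null_sets M) \<subseteq> sets M"
      using natural_sets by (intro sets.sigma_sets_subset) auto
    then show ?thesis unfolding G_def by auto
  qed
  then have G_Pow: "G s \<subseteq> Pow (space M)" for s
    using sets.sets_into_space by blast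
  have sets_eq: "sets (bm_filtration M d B s) = sigma_sets (space M) (G s)"
    and space_eq: "space (bm_filtration M d B s) = space M" for s
    unfolding bm_filtration_def G_def[symmetric] using G_Pow by (simp_all add: sets_measure_of space_measure_of)
  show "filtration (space M) (bm_filtration M d B)"
  proof
    show "sets (bm_filtration M d B s) \<subseteq> sets (bm_filtration M d B s')" if "s \<le> s'" for s s'
      unfolding sets_eq using that by (intro sigma_sets_mono') (auto simp: G_def)
  qed (rule space_eq)
  show "sets (bm_filtration M d B s) \<subseteq> sets M"
    unfolding sets_eq by (rule sets.sigma_sets_subset[OF G_sets])
qed

theorem theorem1:
  fixes M :: "'w measure" and d :: nat and B :: "nat \<Rightarrow> real \<Rightarrow> 'w \<Rightarrow> real"
    and p q l \<epsilon> \<theta> :: real and \<tau> :: "'w \<Rightarrow> real" and \<xi> :: "'w \<Rightarrow> real"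
    and a x :: "real \<Rightarrow> 'w \<Rightarrow> real"
  defines "F \<equiv> bm_filtration M d B"
  assumes complete: "complete_measure M"
    and bm: "brownian_motion M d B" and d_pos: "0 < d"
    and p_gt: "p > 1" and l_nonneg: "l \<ge> 0" and pq: "1 / p + 1 / q = 1"
    and tau_nonneg: "\<forall>w\<in>space M. 0 \<le> \<tau> w"
    and tau_stop: "stopping_time F \<tau>"
    and xi_nonneg: "\<forall>w\<in>space M. 0 \<le> \<xi> w"
    and a_nonneg: "\<forall>t\<ge>0. \<forall>w\<in>space M. 0 \<le> a t w" and a_prog: "progressive F a"
    and x_nonneg: "\<forall>t\<ge>0. \<forall>w\<in>space M. 0 \<le> x t w" and x_prog: "progressive F x"
    and eps_pos: "\<epsilon> > 0" and a_gt_eps: "\<forall>t\<ge>0. \<forall>w\<in>space M. a t w > \<epsilon>"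
    and a_loc_int: "AE w in M. \<forall>t\<ge>0. set_integrable lborel {0..t} (\<lambda>s. a s w)"
    and theta_nonneg: "\<theta> \<ge> 0"
    and H1: "(\<integral>\<^sup>+ w. ennreal (exp (q / 2 * max (2 * l - \<theta>) 0 *
                 (LBINT s:{0..\<tau> w}. a s w))) \<partial>M) < \<infinity>"
    and xi_meas: "\<xi> \<in> borel_measurable (filtration.pre_sigma (space M) F \<tau>)"
    and H2: "(\<integral>\<^sup>+ w. ennreal (exp (p / 2 * \<theta> * (LBINT s:{0..\<tau> w}. a s w)) * \<bar>\<xi> w\<bar> powr p) \<partial>M) < \<infinity>"
    and x_cadlag: "cadlag (space M) x" and x_adapted: "adapted F x"
    and H3_fin: "AE w in M. (\<integral>\<^sup>+ t\<in>{0..\<tau> w}.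
                   ennreal (a t w * exp (\<theta> / 2 * (LBINT s:{0..t}. a s w)) * \<bar>x t w\<bar>) \<partial>lborel) < \<infinity>"
    and H3: "(\<integral>\<^sup>+ w. ennreal ((enn2real (\<integral>\<^sup>+ t\<in>{0..\<tau> w}.
                   ennreal (a t w * exp (\<theta> / 2 * (LBINT s:{0..t}. a s w)) * \<bar>x t w\<bar>) \<partial>lborel)) powr p) \<partial>M) < \<infinity>"
    and hyp: "\<forall>t\<ge>0. AE w in M. x t w \<le>
               real_cond_exp M (F t) (\<lambda>w. \<xi> w + l * (LBINT s:{min t (\<tau> w)..\<tau> w}. a s w * x s w)) w"
  shows "\<forall>t\<ge>0. AE w in M. x t w \<le>
           real_cond_exp M (F t) (\<lambda>w. \<xi> w * exp (l * (LBINT s:{min t (\<tau> w)..\<tau> w}. a s w))) w"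
proof -
  interpret stochastic_gronwall M F \<tau> \<xi> a x p q l \<theta>
    using bm_filtration[OF bm] assms(2-)
    by (intro stochastic_gronwall.intro stochastic_gronwall_axioms.intro)
      (simp_all add: F_def brownian_motion_def)
  show ?thesis using x_le_real_cond_exp_xi_exp by blast
qed

end
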